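(* Let $(M,d)$ be a pointed metric space. The space $\mathrm{Lip}_0(M)$ has the SD2P if and only if for every $n\in\mathbb N$, all optimal $\mu_1,\dots,\mu_n\in ba(\widetilde M)$ with $\|\mu_i\|=1$, and every $\gamma\in(0,1)$, there exist subsets $A_1,\dots,A_n\subseteq\widetilde M$ with $\mu_i(A_i)\ge\gamma$ for all $i$, functions $f_1,g_1,\dots,f_n,g_n\in B_{\mathrm{Lip}_0(M)}$, and $u,v\in M$ with $u\ne v$ such that for all $i\in\{1,\dots,n\}$ and $(x,y)\in A_i$, $f_i(m_{x,y})\ge\gamma$ and $g_i(m_{x,y})\ge\gamma$, and for all $i\in\{1,\dots,n\}$ and $x,y\in\pi(A_i)$, \[\max\{f_i(x)-f_i(y),\,g_i(y)-g_i(x)\}+\gamma d(u,v)\le d(x,u)+d(y,v).\]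
   Context: $M$ has base point $0$; $\mathrm{Lip}_0(M)$ is the real Banach space of Lipschitz $f\colon M\to\mathbb R$ with $f(0)=0$, normed by the best Lipschitz constant, with unit ball $B_{\mathrm{Lip}_0(M)}$. A Banach space $X$ has the SD2P if for all $n\in\mathbb N$, $\lambda_1,\dots,\lambda_n\ge0$ with $\sum\lambda_i=1$ and slices $S_1,\dots,S_n$ of $B_X$ (sets $\{x\in B_X:x^*(x)>1-\alpha\}$ with $\|x^*\|=1$, $\alpha>0$), $\sum_i\lambda_iS_i$ has diameter $2$. $\widetilde M=\{(x,y)\in M\times M:x\ne y\}$, $f(m_{x,y})=(f(x)-f(y))/d(x,y)$, $\pi(A)=\{x\in M:\exists y,\ (x,y)\in A\text{ or }(y,x)\in A\}$. $ba(\widetilde M)$ is the Banach space of bounded finitely additive signed measures on the power set of $\widetilde M$ with norm $|\mu|(\widetilde M)$. $\Phi f(x,y)=(f(x)-f(y))/d(x,y)$ and $(\Phi^*\mu)(f)=\int_{\widetilde M}\Phi f\,d\mu$. $\mu$ is optimal if positive and $\|\Phi^*\mu\|=\|\mu\|$. *)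

theory Defs
  imports "HOL-Analysis.Analysis"
begin

text \<open>Elements of Lip_0(M) are represented as functions 'a => real that vanish at z and
  outside M (so representatives are unique) and are Lipschitz on M.\<close>

definition lip0 :: "'a set \<Rightarrow> ('a \<Rightarrow> 'a \<Rightarrow> real) \<Rightarrow> 'a \<Rightarrow> ('a \<Rightarrow> real) set" where
  "lip0 M d z = {f. f z = 0 \<and> (\<forall>x. x \<notin> M \<longrightarrow> f x = 0) \<and>
                   (\<exists>L. \<forall>x\<in>M. \<forall>y\<in>M. \<bar>f x - f y\<bar> \<le> L * d x y)}"

text \<open>Best Lipschitz constant (0 if M has fewer than two points).\<close>
definition lipnorm :: "'a set \<Rightarrow> ('a \<Rightarrow> 'a \<Rightarrow> real) \<Rightarrow> ('a \<Rightarrow> real) \<Rightarrow> real" where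
  "lipnorm M d f = Sup ({\<bar>f x - f y\<bar> / d x y | x y. x \<in> M \<and> y \<in> M \<and> x \<noteq> y} \<union> {0})"

definition lip0_ball :: "'a set \<Rightarrow> ('a \<Rightarrow> 'a \<Rightarrow> real) \<Rightarrow> 'a \<Rightarrow> ('a \<Rightarrow> real) set" where
  "lip0_ball M d z = {f \<in> lip0 M d z. lipnorm M d f \<le> 1}"

text \<open>Elements of the dual space Lip_0(M)^*: linear bounded functionals on lip0
  (values outside lip0 are irrelevant).\<close>
definition lip0_dual :: "'a set \<Rightarrow> ('a \<Rightarrow> 'a \<Rightarrow> real) \<Rightarrow> 'a \<Rightarrow> (('a \<Rightarrow> real) \<Rightarrow> real) \<Rightarrow> bool" where
  "lip0_dual M d z \<phi> \<longleftrightarrow>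
     (\<forall>f\<in>lip0 M d z. \<forall>g\<in>lip0 M d z. \<forall>a b::real.
        \<phi> (\<lambda>x. a * f x + b * g x) = a * \<phi> f + b * \<phi> g) \<and>
     (\<exists>C. \<forall>f\<in>lip0 M d z. \<bar>\<phi> f\<bar> \<le> C * lipnorm M d f)"

definition dual_norm :: "'a set \<Rightarrow> ('a \<Rightarrow> 'a \<Rightarrow> real) \<Rightarrow> 'a \<Rightarrow> (('a \<Rightarrow> real) \<Rightarrow> real) \<Rightarrow> real" where
  "dual_norm M d z \<phi> = Sup ((\<lambda>f. \<bar>\<phi> f\<bar>) ` lip0_ball M d z)"

definition slice :: "'a set \<Rightarrow> ('a \<Rightarrow> 'a \<Rightarrow> real) \<Rightarrow> 'a \<Rightarrow> (('a \<Rightarrow> real) \<Rightarrow> real) \<Rightarrow> real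
                     \<Rightarrow> ('a \<Rightarrow> real) set" where
  "slice M d z \<phi> \<alpha> = {f \<in> lip0_ball M d z. \<phi> f > 1 - \<alpha>}"

definition lip_diam :: "'a set \<Rightarrow> ('a \<Rightarrow> 'a \<Rightarrow> real) \<Rightarrow> ('a \<Rightarrow> real) set \<Rightarrow> real" where
  "lip_diam M d S = Sup {lipnorm M d (\<lambda>x. f x - g x) | f g. f \<in> S \<and> g \<in> S}"

definition convex_comb_sets :: "nat \<Rightarrow> (nat \<Rightarrow> real) \<Rightarrow> (nat \<Rightarrow> ('a \<Rightarrow> real) set) \<Rightarrow> ('a \<Rightarrow> real) set" where
  "convex_comb_sets n lam S = {(\<lambda>x. \<Sum>i<n. lam i * f i x) | f. \<forall>i<n. f i \<in> S i}"

definition SD2P_lip0 :: "'a set \<Rightarrow> ('a \<Rightarrow> 'a \<Rightarrow> real) \<Rightarrow> 'a \<Rightarrow> bool" where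
  "SD2P_lip0 M d z \<longleftrightarrow>
     (\<forall>n lam \<phi> \<alpha>. (\<forall>i<n. lam i \<ge> 0) \<and> (\<Sum>i<n. lam i) = 1 \<and>
        (\<forall>i<n. lip0_dual M d z (\<phi> i) \<and> dual_norm M d z (\<phi> i) = 1 \<and> \<alpha> i > 0) \<longrightarrow>
        lip_diam M d (convex_comb_sets n lam (\<lambda>i. slice M d z (\<phi> i) (\<alpha> i))) = 2)"

definition Mtilde :: "'a set \<Rightarrow> ('a \<times> 'a) set" where
  "Mtilde M = {(x, y). x \<in> M \<and> y \<in> M \<and> x \<noteq> y}"

definition molecule_val :: "('a \<Rightarrow> 'a \<Rightarrow> real) \<Rightarrow> ('a \<Rightarrow> real) \<Rightarrow> 'a \<times> 'a \<Rightarrow> real" where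
  "molecule_val d f p = (f (fst p) - f (snd p)) / d (fst p) (snd p)"

definition pi_set :: "('a \<times> 'a) set \<Rightarrow> 'a set" where
  "pi_set A = {x. \<exists>y. (x, y) \<in> A \<or> (y, x) \<in> A}"

definition is_ba :: "('b set) \<Rightarrow> ('b set \<Rightarrow> real) \<Rightarrow> bool" where
  "is_ba T \<mu> \<longleftrightarrow>
     (\<forall>A B. A \<subseteq> T \<and> B \<subseteq> T \<and> A \<inter> B = {} \<longrightarrow> \<mu> (A \<union> B) = \<mu> A + \<mu> B) \<and>
     (\<exists>C. \<forall>A. A \<subseteq> T \<longrightarrow> \<bar>\<mu> A\<bar> \<le> C)"

definition ba_norm :: "('b set) \<Rightarrow> ('b set \<Rightarrow> real) \<Rightarrow> real" where
  "ba_norm T \<mu> = Sup {(\<Sum>B\<in>P. \<bar>\<mu> B\<bar>) | P. finite P \<and> \<Union>P = T \<and>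
                        (\<forall>B\<in>P. \<forall>C\<in>P. B \<noteq> C \<longrightarrow> B \<inter> C = {})}"

definition positive_ba :: "('b set) \<Rightarrow> ('b set \<Rightarrow> real) \<Rightarrow> bool" where
  "positive_ba T \<mu> \<longleftrightarrow> (\<forall>A. A \<subseteq> T \<longrightarrow> \<mu> A \<ge> 0)"

text \<open>Integral of a bounded function h over T w.r.t. a finitely additive measure mu:
  limit of integrals of the simple functions floor(k h)/k (uniform approximations of h).\<close>
definition fa_integral :: "('b set) \<Rightarrow> ('b set \<Rightarrow> real) \<Rightarrow> ('b \<Rightarrow> real) \<Rightarrow> real" where
  "fa_integral T \<mu> h = lim (\<lambda>k.
     \<Sum>j\<in>{\<lfloor>real (Suc k) * h p\<rfloor> | p. p \<in> T}.
        (real_of_int j / real (Suc k)) * \<mu> {p \<in> T. \<lfloor>real (Suc k) * h p\<rfloor> = j})"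

definition Phi_star :: "'a set \<Rightarrow> ('a \<Rightarrow> 'a \<Rightarrow> real) \<Rightarrow> (('a \<times> 'a) set \<Rightarrow> real) \<Rightarrow> ('a \<Rightarrow> real) \<Rightarrow> real" where
  "Phi_star M d \<mu> f = fa_integral (Mtilde M) \<mu> (molecule_val d f)"

definition optimal :: "'a set \<Rightarrow> ('a \<Rightarrow> 'a \<Rightarrow> real) \<Rightarrow> 'a \<Rightarrow> (('a \<times> 'a) set \<Rightarrow> real) \<Rightarrow> bool" where
  "optimal M d z \<mu> \<longleftrightarrow> is_ba (Mtilde M) \<mu> \<and> positive_ba (Mtilde M) \<mu> \<and>
     dual_norm M d z (Phi_star M d \<mu>) = ba_norm (Mtilde M) \<mu>"

end

theory Submission
  imports Defs
begin

text \<open>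
  Norm-one functionals on \<open>Lip\<^sub>0(M)\<close> and positive finitely additive probability measures on
  \<open>M\<^sup>~\<close> correspond to each other: integrating molecules against such a measure gives a functional of
  norm one, and conversely Hahn--Banach, applied with the sublinear functional \<open>h \<mapsto> sup h\<close> on the
  bounded functions on \<open>M\<^sup>~\<close>, extends a norm-one functional from the molecules to a positive
  normalised functional, that is, to integration against a measure.

  If \<open>Lip\<^sub>0(M)\<close> has the SD2P, two averages of slice elements with weights \<open>1/n\<close> differ by almost
  \<open>2 d(u,v)\<close> between some points \<open>u\<close> and \<open>v\<close>; hence every summand has a gap of size \<open>\<gamma> d(u,v)\<close>
  there, and a Chebyshev estimate shows that the molecules on which both chosen functions of a slice
  are at least \<open>\<gamma>\<close> have measure at least \<open>\<gamma>\<close>. Conversely, the inequality on \<open>\<pi>(A\<^sub>i)\<close> is exactly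
  what is needed to extend \<open>f\<^sub>i\<close> from \<open>\<pi>(A\<^sub>i)\<close> to a 1-Lipschitz function with a gap \<open>\<gamma> d(u,v)\<close> between
  \<open>u\<close> and \<open>v\<close>; these extensions lie in the slices, and averages of them differ by \<open>2\<gamma> d(u,v)\<close>.
\<close>

section \<open>Finitely additive integration\<close>

lemma le_if_le_plus_inverse_Suc:
  fixes x y c :: real
  assumes "\<And>k. x \<le> y + c * inverse (real (Suc k))"
  shows "x \<le> y"
proof -
  have "(\<lambda>k. y + c * inverse (real (Suc k))) \<longlonglongrightarrow> y + c * 0"
    by (intro tendsto_intros LIMSEQ_inverse_real_of_nat)
  then show ?thesis
    using assms by (intro LIMSEQ_le_const) auto
qed

lemma bounded_lincomb_comp:
  fixes f g :: "'b \<Rightarrow> real"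
  assumes "bounded (f ` S)" "bounded (g ` S)"
  shows "bounded ((\<lambda>x. a * f x + b * g x) ` S)"
  using bounded_plus_comp[OF bounded_scaleR_comp[OF assms(1)] bounded_scaleR_comp[OF assms(2)]]
  by simp

lemma bounded_const_image: "bounded ((\<lambda>x. c :: real) ` S)"
  by (auto simp: bounded_real intro!: exI[of _ "\<bar>c\<bar>"])

definition floor_approx :: "nat \<Rightarrow> ('b \<Rightarrow> real) \<Rightarrow> 'b \<Rightarrow> real" where
  "floor_approx k h p = real_of_int \<lfloor>real (Suc k) * h p\<rfloor> / real (Suc k)"

lemma floor_approx_le: "floor_approx k h p \<le> h p"
  using of_int_floor_le[of "real (Suc k) * h p"]
  by (simp add: floor_approx_def divide_le_eq mult.commute)

lemma floor_approx_gt: "h p - inverse (real (Suc k)) < floor_approx k h p"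
proof -
  have "real (Suc k) * h p < real_of_int \<lfloor>real (Suc k) * h p\<rfloor> + 1"
    by (rule real_of_int_floor_add_one_gt)
  then have "h p < (real_of_int \<lfloor>real (Suc k) * h p\<rfloor> + 1) / real (Suc k)"
    by (simp add: less_divide_eq mult.commute)
  then show ?thesis
    by (simp add: floor_approx_def add_divide_distrib inverse_eq_divide)
qed

lemma abs_floor_approx_le: "\<bar>h p - floor_approx k h p\<bar> \<le> inverse (real (Suc k))"
  using floor_approx_le[of k h p] floor_approx_gt[of h p k] by simp

lemma floor_approx_nonneg: "0 \<le> h p \<Longrightarrow> 0 \<le> floor_approx k h p"
  by (simp add: floor_approx_def)

lemma finite_floor_image:
  fixes h :: "'b \<Rightarrow> real"
  assumes "bounded (h ` T)"
  shows "finite ((\<lambda>p. \<lfloor>h p\<rfloor>) ` T)"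
proof -
  obtain C where C: "\<forall>x\<in>h ` T. \<bar>x\<bar> \<le> C"
    using assms unfolding bounded_real by blast
  have "\<lfloor>h p\<rfloor> \<in> {\<lfloor>- C\<rfloor> .. \<lfloor>C\<rfloor>}" if "p \<in> T" for p
  proof -
    have "\<bar>h p\<bar> \<le> C"
      using C that by blast
    then show ?thesis
      unfolding atLeastAtMost_iff by (intro conjI floor_mono) linarith+
  qed
  then show ?thesis
    by (rule finite_subset[OF image_subsetI]) simp_all
qed

lemma finite_floor_scaled_image:
  assumes "bounded (h ` T)"
  shows "finite ((\<lambda>p. \<lfloor>real (Suc k) * h p\<rfloor>) ` T)"
  using bounded_scaleR_comp[OF assms, of "real (Suc k)"] by (intro finite_floor_image) simp

lemma finite_floor_approx_image:
  assumes "bounded (h ` T)"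
  shows "finite (floor_approx k h ` T)"
  using finite_imageI[OF finite_floor_scaled_image[OF assms], of "\<lambda>j. real_of_int j / real (Suc k)"]
  by (simp add: floor_approx_def image_image)

definition fa_simple_integral :: "'b set \<Rightarrow> ('b set \<Rightarrow> real) \<Rightarrow> ('b \<Rightarrow> real) \<Rightarrow> real" where
  "fa_simple_integral T \<mu> s = (\<Sum>c\<in>s ` T. c * \<mu> {p\<in>T. s p = c})"

locale pos_ba =
  fixes T :: "'b set" and \<mu> :: "'b set \<Rightarrow> real"
  assumes is_ba: "is_ba T \<mu>" and positive: "positive_ba T \<mu>"
begin

lemma additive: "A \<subseteq> T \<Longrightarrow> B \<subseteq> T \<Longrightarrow> A \<inter> B = {} \<Longrightarrow> \<mu> (A \<union> B) = \<mu> A + \<mu> B"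
  using is_ba by (auto simp: is_ba_def)

lemma empty [simp]: "\<mu> {} = 0"
  using additive[of "{}" "{}"] by simp

lemma nonneg: "A \<subseteq> T \<Longrightarrow> 0 \<le> \<mu> A"
  using positive by (auto simp: positive_ba_def)

lemma Diff:
  assumes "A \<subseteq> B" "B \<subseteq> T"
  shows "\<mu> (B - A) = \<mu> B - \<mu> A"
proof -
  have "\<mu> (A \<union> (B - A)) = \<mu> A + \<mu> (B - A)"
    using assms by (intro additive) auto
  moreover have "A \<union> (B - A) = B"
    using assms by blast
  ultimately show ?thesis
    by simp
qed

lemma mono: "A \<subseteq> B \<Longrightarrow> B \<subseteq> T \<Longrightarrow> \<mu> A \<le> \<mu> B"
  using Diff[of A B] nonneg[of "B - A"] by auto

lemma Un_le:
  assumes "A \<subseteq> T" "B \<subseteq> T"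
  shows "\<mu> (A \<union> B) \<le> \<mu> A + \<mu> B"
proof -
  have "\<mu> (A \<union> B) = \<mu> A + \<mu> (B - A)"
    using additive[of A "B - A"] assms by (auto simp: Un_Diff_cancel)
  moreover have "\<mu> (B - A) \<le> \<mu> B"
    using assms by (intro mono) auto
  ultimately show ?thesis
    by simp
qed

lemma finite_UN_disjoint:
  assumes "finite F" "\<forall>j\<in>F. B j \<subseteq> T" "disjoint_family_on B F"
  shows "\<mu> (\<Union>j\<in>F. B j) = (\<Sum>j\<in>F. \<mu> (B j))"
  using assms
proof (induction F rule: finite_induct)
  case (insert x F)
  have "disjoint_family_on B F"
    using insert.prems(2) by (rule disjoint_family_on_mono[rotated]) auto
  then have IH: "\<mu> (\<Union>j\<in>F. B j) = (\<Sum>j\<in>F. \<mu> (B j))"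
    using insert.IH insert.prems(1) by blast
  have "B x \<inter> (\<Union>j\<in>F. B j) = {}"
    using insert.hyps(2) insert.prems(2) by (fastforce simp: disjoint_family_on_def)
  then have "\<mu> (B x \<union> (\<Union>j\<in>F. B j)) = \<mu> (B x) + \<mu> (\<Union>j\<in>F. B j)"
    using insert.prems(1) by (intro additive) auto
  with IH insert.hyps show ?case
    by simp
qed simp

lemma ba_norm_eq: "ba_norm T \<mu> = \<mu> T"
proof -
  let ?sums = "{(\<Sum>B\<in>P. \<bar>\<mu> B\<bar>) | P. finite P \<and> \<Union>P = T \<and>
                  (\<forall>B\<in>P. \<forall>C\<in>P. B \<noteq> C \<longrightarrow> B \<inter> C = {})}"
  have partition_sum: "(\<Sum>B\<in>P. \<bar>\<mu> B\<bar>) = \<mu> T"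
    if "finite P" "\<Union>P = T" "\<forall>B\<in>P. \<forall>C\<in>P. B \<noteq> C \<longrightarrow> B \<inter> C = {}" for P
  proof -
    have "(\<Sum>B\<in>P. \<bar>\<mu> B\<bar>) = (\<Sum>B\<in>P. \<mu> B)"
      using that(2) by (intro sum.cong refl abs_of_nonneg nonneg) blast
    also have "\<dots> = \<mu> (\<Union>B\<in>P. B)"
      using that by (intro finite_UN_disjoint[symmetric]) (auto simp: disjoint_family_on_def)
    finally show ?thesis
      using that(2) by simp
  qed
  have "?sums \<subseteq> {\<mu> T}"
    using partition_sum by blast
  moreover have "\<mu> T \<in> ?sums"
    using nonneg[of T] by (intro CollectI exI[of _ "{T}"]) simp
  ultimately have "?sums = {\<mu> T}"
    by blast
  then show ?thesis
    by (simp add: ba_norm_def)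
qed

lemma fa_simple_integral_factor:
  assumes "finite (key ` T)"
  shows "fa_simple_integral T \<mu> (\<lambda>p. w (key p)) = (\<Sum>j\<in>key ` T. w j * \<mu> {p\<in>T. key p = j})"
proof -
  have level_set: "\<mu> {p\<in>T. w (key p) = c} = (\<Sum>j\<in>{j\<in>key ` T. w j = c}. \<mu> {p\<in>T. key p = j})" for c
  proof -
    have "{p\<in>T. w (key p) = c} = (\<Union>j\<in>{j\<in>key ` T. w j = c}. {p\<in>T. key p = j})"
      by auto
    then show ?thesis
      using assms by (auto intro!: finite_UN_disjoint simp: disjoint_family_on_def)
  qed
  have "fa_simple_integral T \<mu> (\<lambda>p. w (key p))
      = (\<Sum>c\<in>w ` key ` T. \<Sum>j\<in>{j\<in>key ` T. w j = c}. w j * \<mu> {p\<in>T. key p = j})"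
    by (simp add: fa_simple_integral_def level_set sum_distrib_left image_image)
  also have "\<dots> = (\<Sum>j\<in>key ` T. w j * \<mu> {p\<in>T. key p = j})"
    using assms by (intro sum.group) auto
  finally show ?thesis .
qed

lemma fa_simple_integral_lincomb:
  assumes "finite (s ` T)" "finite (t ` T)"
  shows "fa_simple_integral T \<mu> (\<lambda>p. a * s p + b * t p)
    = a * fa_simple_integral T \<mu> s + b * fa_simple_integral T \<mu> t"
proof -
  define key where "key p = (s p, t p)" for p
  have "key ` T \<subseteq> s ` T \<times> t ` T"
    by (auto simp: key_def)
  then have fin: "finite (key ` T)"
    using assms by (auto dest: finite_subset)
  have "fa_simple_integral T \<mu> (\<lambda>p. a * s p + b * t p)
      = (\<Sum>j\<in>key ` T. (a * fst j + b * snd j) * \<mu> {p\<in>T. key p = j})"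
    using fa_simple_integral_factor[OF fin, of "\<lambda>j. a * fst j + b * snd j"] by (simp add: key_def)
  also have "\<dots> = a * (\<Sum>j\<in>key ` T. fst j * \<mu> {p\<in>T. key p = j})
                 + b * (\<Sum>j\<in>key ` T. snd j * \<mu> {p\<in>T. key p = j})"
    by (simp add: algebra_simps sum.distrib sum_distrib_left)
  also have "\<dots> = a * fa_simple_integral T \<mu> s + b * fa_simple_integral T \<mu> t"
    using fa_simple_integral_factor[OF fin, of fst] fa_simple_integral_factor[OF fin, of snd]
    by (simp add: key_def)
  finally show ?thesis .
qed

lemma fa_simple_integral_nonneg: "(\<And>p. p \<in> T \<Longrightarrow> 0 \<le> s p) \<Longrightarrow> 0 \<le> fa_simple_integral T \<mu> s"
  unfolding fa_simple_integral_def by (intro sum_nonneg) (auto intro!: mult_nonneg_nonneg nonneg)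

lemma fa_simple_integral_const: "fa_simple_integral T \<mu> (\<lambda>p. c) = c * \<mu> T"
  by (cases "T = {}") (auto simp: fa_simple_integral_def image_constant_conv)

lemma fa_simple_integral_le_plus_const:
  assumes "finite (s ` T)" "finite (t ` T)" "\<And>p. p \<in> T \<Longrightarrow> s p \<le> t p + e"
  shows "fa_simple_integral T \<mu> s \<le> fa_simple_integral T \<mu> t + e * \<mu> T"
proof -
  have fin_shifted: "finite ((\<lambda>p. 1 * t p + e * 1) ` T)"
    using finite_imageI[OF assms(2), of "\<lambda>x. x + e"] by (simp add: image_image)
  have fin_const: "finite ((\<lambda>p. 1::real) ` T)"
    by (simp add: image_constant_conv)
  have "0 \<le> fa_simple_integral T \<mu> (\<lambda>p. 1 * (1 * t p + e * 1) + (-1) * s p)"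
    using assms(3) by (intro fa_simple_integral_nonneg) simp
  also have "\<dots> = fa_simple_integral T \<mu> t + e * \<mu> T - fa_simple_integral T \<mu> s"
    using fa_simple_integral_lincomb[OF fin_shifted assms(1), of 1 "-1"]
      fa_simple_integral_lincomb[OF assms(2) fin_const, of 1 e] fa_simple_integral_const[of 1]
    by simp
  finally show ?thesis
    by simp
qed

lemma fa_simple_integral_floor_approx:
  assumes "bounded (h ` T)"
  shows "fa_simple_integral T \<mu> (floor_approx k h)
    = (\<Sum>j\<in>{\<lfloor>real (Suc k) * h p\<rfloor> | p. p \<in> T}.
         real_of_int j / real (Suc k) * \<mu> {p\<in>T. \<lfloor>real (Suc k) * h p\<rfloor> = j})"
  using fa_simple_integral_factor[OF finite_floor_scaled_image[OF assms],
      of "\<lambda>j. real_of_int j / real (Suc k)"]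
  by (simp add: floor_approx_def[abs_def] Setcompr_eq_image)

lemma fa_integral_eq_lim:
  "bounded (h ` T) \<Longrightarrow> fa_integral T \<mu> h = lim (\<lambda>k. fa_simple_integral T \<mu> (floor_approx k h))"
  by (simp add: fa_integral_def fa_simple_integral_floor_approx)

lemma fa_simple_integral_floor_approx_le:
  assumes "bounded (h ` T)"
  shows "fa_simple_integral T \<mu> (floor_approx k h)
    \<le> fa_simple_integral T \<mu> (floor_approx m h) + inverse (real (Suc m)) * \<mu> T"
  using floor_approx_le[of k h] floor_approx_gt[of h _ m]
  by (intro fa_simple_integral_le_plus_const finite_floor_approx_image assms)
    (metis add.commute less_eq_real_def diff_less_eq order_trans)

lemma fa_integral_LIMSEQ:
  assumes "bounded (h ` T)"
  shows "(\<lambda>k. fa_simple_integral T \<mu> (floor_approx k h)) \<longlonglongrightarrow> fa_integral T \<mu> h"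
proof -
  let ?X = "\<lambda>k. fa_simple_integral T \<mu> (floor_approx k h)"
  have "Cauchy ?X"
  proof (rule metric_CauchyI)
    fix e :: real
    assume "0 < e"
    then obtain N where N: "inverse (real (Suc N)) < e / (\<mu> T + 1)"
      using reals_Archimedean[of "e / (\<mu> T + 1)"] nonneg[of T] by auto
    have "dist (?X m) (?X n) < e" if "N \<le> m" "N \<le> n" for m n
    proof -
      have "inverse (real (Suc m)) \<le> inverse (real (Suc N))" "inverse (real (Suc n)) \<le> inverse (real (Suc N))"
        using that by (simp_all add: field_simps)
      then have "\<bar>?X m - ?X n\<bar> \<le> inverse (real (Suc N)) * \<mu> T"
        using fa_simple_integral_floor_approx_le[OF assms, of m n] nonneg[of T]
          fa_simple_integral_floor_approx_le[OF assms, of n m]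
          mult_right_mono[of _ "inverse (real (Suc N))" "\<mu> T"]
        by (smt (verit, best) order_refl)
      also have "\<dots> \<le> e / (\<mu> T + 1) * \<mu> T"
        using N nonneg[of T] by (intro mult_right_mono) auto
      also have "\<dots> < e"
        using \<open>0 < e\<close> nonneg[of T] by (simp add: field_simps)
      finally show ?thesis
        by (simp add: dist_real_def)
    qed
    then show "\<exists>N. \<forall>m\<ge>N. \<forall>n\<ge>N. dist (?X m) (?X n) < e"
      by blast
  qed
  then show ?thesis
    using fa_integral_eq_lim[OF assms] by (simp add: Cauchy_convergent_iff convergent_LIMSEQ_iff)
qed

lemma fa_integral_approx:
  assumes h: "bounded (h ` T)" and s: "finite (s ` T)" and close: "\<forall>p\<in>T. \<bar>h p - s p\<bar> \<le> \<epsilon>"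
  shows "\<bar>fa_integral T \<mu> h - fa_simple_integral T \<mu> s\<bar> \<le> \<epsilon> * \<mu> T"
proof -
  let ?X = "\<lambda>k. fa_simple_integral T \<mu> (floor_approx k h)"
  have "?X k \<le> fa_simple_integral T \<mu> s + \<epsilon> * \<mu> T" for k
  proof (intro fa_simple_integral_le_plus_const finite_floor_approx_image h s)
    show "floor_approx k h p \<le> s p + \<epsilon>" if "p \<in> T" for p
      using close that floor_approx_le[of k h p] by (auto simp: abs_le_iff)
  qed
  then have upper: "fa_integral T \<mu> h \<le> fa_simple_integral T \<mu> s + \<epsilon> * \<mu> T"
    by (intro LIMSEQ_le_const2[OF fa_integral_LIMSEQ[OF h]]) auto
  have "fa_simple_integral T \<mu> s \<le> ?X k + (\<epsilon> + inverse (real (Suc k))) * \<mu> T" for k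
  proof (intro fa_simple_integral_le_plus_const finite_floor_approx_image h s)
    show "s p \<le> floor_approx k h p + (\<epsilon> + inverse (real (Suc k)))" if "p \<in> T" for p
      using close that floor_approx_gt[of h p k] by (auto simp: abs_le_iff)
  qed
  then have "fa_simple_integral T \<mu> s - \<epsilon> * \<mu> T \<le> ?X k + inverse (real (Suc k)) * \<mu> T" for k
    by (simp add: algebra_simps)
  moreover have "(\<lambda>k. ?X k + inverse (real (Suc k)) * \<mu> T) \<longlonglongrightarrow> fa_integral T \<mu> h + 0 * \<mu> T"
    by (intro tendsto_intros fa_integral_LIMSEQ h LIMSEQ_inverse_real_of_nat)
  ultimately have "fa_simple_integral T \<mu> s - \<epsilon> * \<mu> T \<le> fa_integral T \<mu> h"
    by (intro LIMSEQ_le_const) auto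
  with upper show ?thesis
    by (simp add: abs_le_iff)
qed

lemma fa_integral_simple: "finite (s ` T) \<Longrightarrow> fa_integral T \<mu> s = fa_simple_integral T \<mu> s"
  using fa_integral_approx[OF finite_imp_bounded, of s s 0] by simp

lemma fa_integral_const: "fa_integral T \<mu> (\<lambda>p. c) = c * \<mu> T"
  by (simp add: fa_integral_simple fa_simple_integral_const image_constant_conv)

lemma fa_integral_indicator:
  assumes "B \<subseteq> T"
  shows "fa_integral T \<mu> (indicator B) = \<mu> B"
proof -
  have "finite (indicator B ` T :: real set)"
    by (rule finite_subset[of _ "{0, 1}"]) (auto simp: indicator_def)
  then have "fa_integral T \<mu> (indicator B) = fa_simple_integral T \<mu> (\<lambda>p. of_bool (p \<in> B))"
    by (simp add: fa_integral_simple indicator_def[abs_def])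
  also have "\<dots> = (\<Sum>j\<in>(\<lambda>p. p \<in> B) ` T. of_bool j * \<mu> {p\<in>T. (p \<in> B) = j})"
    by (rule fa_simple_integral_factor) simp
  also have "\<dots> = (\<Sum>j\<in>UNIV. of_bool j * \<mu> {p\<in>T. (p \<in> B) = j})"
  proof (rule sum.mono_neutral_left)
    show "\<forall>j\<in>UNIV - (\<lambda>p. p \<in> B) ` T. of_bool j * \<mu> {p\<in>T. (p \<in> B) = j} = 0"
    proof
      fix j
      assume "j \<in> UNIV - (\<lambda>p. p \<in> B) ` T"
      then have "{p\<in>T. (p \<in> B) = j} = {}"
        by blast
      then show "of_bool j * \<mu> {p\<in>T. (p \<in> B) = j} = 0"
        by (simp only: empty mult_zero_right)
    qed
  qed simp_all
  also have "\<dots> = \<mu> {p\<in>T. p \<in> B}"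
    by (simp add: UNIV_bool)
  also have "{p\<in>T. p \<in> B} = B"
    using assms by blast
  finally show ?thesis .
qed

lemma fa_integral_lincomb:
  assumes h1: "bounded (h1 ` T)" and h2: "bounded (h2 ` T)"
  shows "fa_integral T \<mu> (\<lambda>p. a * h1 p + b * h2 p) = a * fa_integral T \<mu> h1 + b * fa_integral T \<mu> h2"
proof -
  let ?err = "fa_integral T \<mu> (\<lambda>p. a * h1 p + b * h2 p) - (a * fa_integral T \<mu> h1 + b * fa_integral T \<mu> h2)"
  have "\<bar>?err\<bar> \<le> 0 + (2 * (\<bar>a\<bar> + \<bar>b\<bar>) * \<mu> T) * inverse (real (Suc k))" for k
  proof -
    let ?\<delta> = "inverse (real (Suc k))"
    let ?s1 = "floor_approx k h1" and ?s2 = "floor_approx k h2"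
    have s1: "finite (?s1 ` T)" and s2: "finite (?s2 ` T)"
      using h1 h2 by (simp_all add: finite_floor_approx_image)
    have fin_comb: "finite ((\<lambda>p. a * ?s1 p + b * ?s2 p) ` T)"
      using finite_imageI[OF finite_SigmaI[OF s1 s2], of "\<lambda>(x, y). a * x + b * y"]
      by (rule finite_subset[rotated]) force
    have close_comb: "\<bar>(a * h1 p + b * h2 p) - (a * ?s1 p + b * ?s2 p)\<bar> \<le> (\<bar>a\<bar> + \<bar>b\<bar>) * ?\<delta>" for p
    proof -
      have "\<bar>(a * h1 p + b * h2 p) - (a * ?s1 p + b * ?s2 p)\<bar>
          \<le> \<bar>a\<bar> * \<bar>h1 p - ?s1 p\<bar> + \<bar>b\<bar> * \<bar>h2 p - ?s2 p\<bar>"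
        by (simp add: abs_mult[symmetric] abs_triangle_ineq[THEN order_trans] algebra_simps)
      also have "\<dots> \<le> \<bar>a\<bar> * ?\<delta> + \<bar>b\<bar> * ?\<delta>"
        using abs_floor_approx_le by (intro add_mono mult_left_mono) auto
      finally show ?thesis
        by (simp add: distrib_right)
    qed
    have approx: "\<bar>fa_integral T \<mu> (\<lambda>p. a * h1 p + b * h2 p)
        - (a * fa_simple_integral T \<mu> ?s1 + b * fa_simple_integral T \<mu> ?s2)\<bar> \<le> (\<bar>a\<bar> + \<bar>b\<bar>) * ?\<delta> * \<mu> T"
      using fa_integral_approx[OF bounded_lincomb_comp[OF h1 h2, of a b] fin_comb] close_comb
        fa_simple_integral_lincomb[OF s1 s2]
      by simp
    have "\<bar>fa_integral T \<mu> h1 - fa_simple_integral T \<mu> ?s1\<bar> \<le> ?\<delta> * \<mu> T"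
      by (rule fa_integral_approx[OF h1 s1]) (intro ballI abs_floor_approx_le)
    then have approx1: "\<bar>a * fa_integral T \<mu> h1 - a * fa_simple_integral T \<mu> ?s1\<bar> \<le> \<bar>a\<bar> * (?\<delta> * \<mu> T)"
      unfolding right_diff_distrib[symmetric] abs_mult by (rule mult_left_mono) simp
    have "\<bar>fa_integral T \<mu> h2 - fa_simple_integral T \<mu> ?s2\<bar> \<le> ?\<delta> * \<mu> T"
      by (rule fa_integral_approx[OF h2 s2]) (intro ballI abs_floor_approx_le)
    then have approx2: "\<bar>b * fa_integral T \<mu> h2 - b * fa_simple_integral T \<mu> ?s2\<bar> \<le> \<bar>b\<bar> * (?\<delta> * \<mu> T)"
      unfolding right_diff_distrib[symmetric] abs_mult by (rule mult_left_mono) simp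
    have "\<bar>?err\<bar> \<le> (\<bar>a\<bar> + \<bar>b\<bar>) * ?\<delta> * \<mu> T + \<bar>a\<bar> * (?\<delta> * \<mu> T) + \<bar>b\<bar> * (?\<delta> * \<mu> T)"
      using approx approx1 approx2 by linarith
    then show ?thesis
      by (simp add: algebra_simps)
  qed
  then have "\<bar>?err\<bar> \<le> 0"
    by (rule le_if_le_plus_inverse_Suc)
  then show ?thesis
    by simp
qed

lemma fa_integral_nonneg:
  assumes "bounded (h ` T)" "\<And>p. p \<in> T \<Longrightarrow> 0 \<le> h p"
  shows "0 \<le> fa_integral T \<mu> h"
  using assms
  by (intro LIMSEQ_le_const[OF fa_integral_LIMSEQ] exI[of _ 0] allI impI fa_simple_integral_nonneg
      floor_approx_nonneg)

lemma fa_integral_mono: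
  assumes "bounded (h1 ` T)" "bounded (h2 ` T)" "\<And>p. p \<in> T \<Longrightarrow> h1 p \<le> h2 p"
  shows "fa_integral T \<mu> h1 \<le> fa_integral T \<mu> h2"
  using fa_integral_nonneg[OF bounded_lincomb_comp[OF assms(2,1), of 1 "-1"]] assms(3)
    fa_integral_lincomb[OF assms(2,1), of 1 "-1"]
  by simp

lemma abs_fa_integral_le:
  assumes "\<And>p. p \<in> T \<Longrightarrow> \<bar>h p\<bar> \<le> C"
  shows "\<bar>fa_integral T \<mu> h\<bar> \<le> C * \<mu> T"
proof -
  have h: "bounded (h ` T)"
    using assms by (auto simp: bounded_real)
  have bounds: "- C \<le> h p" "h p \<le> C" if "p \<in> T" for p
    using assms[OF that] by auto
  have "fa_integral T \<mu> h \<le> fa_integral T \<mu> (\<lambda>p. C)" "fa_integral T \<mu> (\<lambda>p. - C) \<le> fa_integral T \<mu> h"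
    using bounds by (auto intro!: fa_integral_mono h simp: image_constant_conv)
  then show ?thesis
    by (simp add: fa_integral_const abs_le_iff)
qed

end

section \<open>Hahn--Banach for spaces of real functions\<close>

definition lincomb_closed :: "('b \<Rightarrow> real) set \<Rightarrow> bool" where
  "lincomb_closed V \<longleftrightarrow> (\<forall>x\<in>V. \<forall>y\<in>V. \<forall>s t. (\<lambda>q. s * x q + t * y q) \<in> V)"

definition linear_on :: "('b \<Rightarrow> real) set \<Rightarrow> (('b \<Rightarrow> real) \<Rightarrow> real) \<Rightarrow> bool" where
  "linear_on V g \<longleftrightarrow> (\<forall>x\<in>V. \<forall>y\<in>V. \<forall>s t. g (\<lambda>q. s * x q + t * y q) = s * g x + t * g y)"

definition sublinear_on :: "('b \<Rightarrow> real) set \<Rightarrow> (('b \<Rightarrow> real) \<Rightarrow> real) \<Rightarrow> bool" where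
  "sublinear_on V p \<longleftrightarrow> (\<forall>x\<in>V. \<forall>y\<in>V. p (\<lambda>q. x q + y q) \<le> p x + p y) \<and>
                        (\<forall>x\<in>V. \<forall>c>0. p (\<lambda>q. c * x q) = c * p x)"

definition dominated_graph ::
  "('b \<Rightarrow> real) set \<Rightarrow> (('b \<Rightarrow> real) \<Rightarrow> real) \<Rightarrow> (('b \<Rightarrow> real) \<times> real) set \<Rightarrow> bool" where
  "dominated_graph V p G \<longleftrightarrow> G \<subseteq> V \<times> UNIV \<and>
     (\<forall>x a y b s t. (x, a) \<in> G \<longrightarrow> (y, b) \<in> G \<longrightarrow> ((\<lambda>q. s * x q + t * y q), s * a + t * b) \<in> G) \<and>
     (\<forall>x a. (x, a) \<in> G \<longrightarrow> a \<le> p x)"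

lemma sublinear_on_add: "sublinear_on V p \<Longrightarrow> x \<in> V \<Longrightarrow> y \<in> V \<Longrightarrow> p (\<lambda>q. x q + y q) \<le> p x + p y"
  by (simp add: sublinear_on_def)

lemma sublinear_on_scale: "sublinear_on V p \<Longrightarrow> x \<in> V \<Longrightarrow> 0 < c \<Longrightarrow> p (\<lambda>q. c * x q) = c * p x"
  by (simp add: sublinear_on_def)

lemma lincomb_closedD:
  "lincomb_closed V \<Longrightarrow> x \<in> V \<Longrightarrow> y \<in> V \<Longrightarrow> (\<lambda>q. s * x q + t * y q) \<in> V"
  by (simp add: lincomb_closed_def)

lemma lincomb_closed_add: "lincomb_closed V \<Longrightarrow> x \<in> V \<Longrightarrow> y \<in> V \<Longrightarrow> (\<lambda>q. x q + y q) \<in> V"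
  using lincomb_closedD[of V x y 1 1] by simp

lemma lincomb_closed_diff: "lincomb_closed V \<Longrightarrow> x \<in> V \<Longrightarrow> y \<in> V \<Longrightarrow> (\<lambda>q. x q - y q) \<in> V"
  using lincomb_closedD[of V x y 1 "-1"] by simp

lemma lincomb_closed_scale: "lincomb_closed V \<Longrightarrow> x \<in> V \<Longrightarrow> (\<lambda>q. s * x q) \<in> V"
  using lincomb_closedD[of V x x s 0] by simp

lemma linear_onD:
  "linear_on V g \<Longrightarrow> x \<in> V \<Longrightarrow> y \<in> V \<Longrightarrow> g (\<lambda>q. s * x q + t * y q) = s * g x + t * g y"
  by (simp add: linear_on_def)

lemma linear_on_scale: "linear_on V g \<Longrightarrow> x \<in> V \<Longrightarrow> g (\<lambda>q. s * x q) = s * g x"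
  using linear_onD[of V g x x s 0] by simp

lemma linear_on_diff: "linear_on V g \<Longrightarrow> x \<in> V \<Longrightarrow> y \<in> V \<Longrightarrow> g (\<lambda>q. x q - y q) = g x - g y"
  using linear_onD[of V g x y 1 "-1"] by simp

context
  fixes V :: "('b \<Rightarrow> real) set" and p :: "('b \<Rightarrow> real) \<Rightarrow> real" and G :: "(('b \<Rightarrow> real) \<times> real) set"
  assumes graph: "dominated_graph V p G"
begin

lemma dominated_graph_lincomb:
  "(x, a) \<in> G \<Longrightarrow> (y, b) \<in> G \<Longrightarrow> ((\<lambda>q. s * x q + t * y q), s * a + t * b) \<in> G"
  using graph by (simp add: dominated_graph_def)

lemma dominated_graph_scale: "(x, a) \<in> G \<Longrightarrow> ((\<lambda>q. s * x q), s * a) \<in> G"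
  using dominated_graph_lincomb[of x a x a s 0] by simp

lemma dominated_graph_le: "(x, a) \<in> G \<Longrightarrow> a \<le> p x"
  using graph by (simp add: dominated_graph_def)

lemma dominated_graph_in_V: "(x, a) \<in> G \<Longrightarrow> x \<in> V"
  using graph by (auto simp: dominated_graph_def)

lemma dominated_graph_zero: "(x, a) \<in> G \<Longrightarrow> ((\<lambda>q. 0), 0) \<in> G"
  using dominated_graph_scale[of x a 0] by simp

text \<open>A dominated graph is single-valued: a vertical segment \<open>(0, a - b)\<close> in it could be
  scaled beyond the bound \<open>p 0\<close>.\<close>

lemma dominated_graph_unique:
  assumes "(x, a) \<in> G" "(x, b) \<in> G"
  shows "a = b"
proof (rule ccontr)
  assume "a \<noteq> b"
  define t where "t = (\<bar>p (\<lambda>q. 0)\<bar> + 1) / (a - b)"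
  have "((\<lambda>q. 1 * x q + (-1) * x q), 1 * a + (-1) * b) \<in> G"
    using assms by (rule dominated_graph_lincomb)
  then have "((\<lambda>q. t * 0), t * (a - b)) \<in> G"
    using dominated_graph_scale[of "\<lambda>q. 0" "a - b" t] by simp
  then have "t * (a - b) \<le> p (\<lambda>q. 0)"
    using dominated_graph_le by simp
  moreover have "t * (a - b) = \<bar>p (\<lambda>q. 0)\<bar> + 1"
    using \<open>a \<noteq> b\<close> by (simp add: t_def)
  ultimately show False
    by simp
qed

end

lemma dominated_graph_chain_Union:
  assumes "C \<noteq> {}" "\<And>G. G \<in> C \<Longrightarrow> dominated_graph V p G" "\<And>G H. G \<in> C \<Longrightarrow> H \<in> C \<Longrightarrow> G \<subseteq> H \<or> H \<subseteq> G"
  shows "dominated_graph V p (\<Union>C)"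
  unfolding dominated_graph_def
proof (intro conjI allI impI)
  show "\<Union>C \<subseteq> V \<times> UNIV" and "\<And>x a. (x, a) \<in> \<Union>C \<Longrightarrow> a \<le> p x"
    using assms(2) unfolding dominated_graph_def by blast+
  fix x a y b s t
  assume "(x, a) \<in> \<Union>C" "(y, b) \<in> \<Union>C"
  then obtain G H where "G \<in> C" "(x, a) \<in> G" "H \<in> C" "(y, b) \<in> H"
    by blast
  from assms(3)[OF \<open>G \<in> C\<close> \<open>H \<in> C\<close>]
  show "((\<lambda>q. s * x q + t * y q), s * a + t * b) \<in> \<Union>C"
  proof
    assume "G \<subseteq> H"
    then have "((\<lambda>q. s * x q + t * y q), s * a + t * b) \<in> H"
      using assms(2)[OF \<open>H \<in> C\<close>] \<open>(x, a) \<in> G\<close> \<open>(y, b) \<in> H\<close> by (blast intro: dominated_graph_lincomb)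
    with \<open>H \<in> C\<close> show ?thesis
      by blast
  next
    assume "H \<subseteq> G"
    then have "((\<lambda>q. s * x q + t * y q), s * a + t * b) \<in> G"
      using assms(2)[OF \<open>G \<in> C\<close>] \<open>(x, a) \<in> G\<close> \<open>(y, b) \<in> H\<close> by (blast intro: dominated_graph_lincomb)
    with \<open>G \<in> C\<close> show ?thesis
      by blast
  qed
qed

lemma dominated_graph_extension_value:
  assumes graph: "dominated_graph V p G" and V: "lincomb_closed V" and p: "sublinear_on V p"
    and "G \<noteq> {}" and x: "x \<in> V"
  obtains c where "\<And>y a. (y, a) \<in> G \<Longrightarrow> a - p (\<lambda>q. y q - x q) \<le> c"
    and "\<And>y a. (y, a) \<in> G \<Longrightarrow> c \<le> p (\<lambda>q. y q + x q) - a"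
proof -
  have gap: "a - p (\<lambda>q. y q - x q) \<le> p (\<lambda>q. y' q + x q) - a'"
    if ya: "(y, a) \<in> G" and ya': "(y', a') \<in> G" for y a y' a'
  proof -
    have V_mem: "(\<lambda>q. y q - x q) \<in> V" "(\<lambda>q. y' q + x q) \<in> V"
      using dominated_graph_in_V[OF graph ya] dominated_graph_in_V[OF graph ya'] x V
      by (auto intro: lincomb_closed_diff lincomb_closed_add)
    have "a + a' \<le> p (\<lambda>q. 1 * y q + 1 * y' q)"
      using dominated_graph_lincomb[OF graph ya ya', of 1 1] dominated_graph_le[OF graph] by simp
    also have "(\<lambda>q. 1 * y q + 1 * y' q) = (\<lambda>q. (y q - x q) + (y' q + x q))"
      by auto
    also have "p \<dots> \<le> p (\<lambda>q. y q - x q) + p (\<lambda>q. y' q + x q)"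
      using p V_mem by (rule sublinear_on_add)
    finally show ?thesis
      by simp
  qed
  define S where "S = {a - p (\<lambda>q. y q - x q) | y a. (y, a) \<in> G}"
  obtain y0 a0 where "(y0, a0) \<in> G"
    using \<open>G \<noteq> {}\<close> by auto
  then have "S \<noteq> {}" and "bdd_above S"
    using gap by (auto simp: S_def intro!: bdd_aboveI[of _ "p (\<lambda>q. y0 q + x q) - a0"])
  show ?thesis
  proof (rule that[of "Sup S"])
    show "a - p (\<lambda>q. y q - x q) \<le> Sup S" if "(y, a) \<in> G" for y a
      using that \<open>bdd_above S\<close> by (intro cSup_upper) (auto simp: S_def)
    show "Sup S \<le> p (\<lambda>q. y q + x q) - a" if "(y, a) \<in> G" for y a
      using that \<open>S \<noteq> {}\<close> gap by (intro cSup_least) (auto simp: S_def)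
  qed
qed

text \<open>Rescaling by \<open>1 / \<bar>t\<bar>\<close> reduces the cases \<open>t > 0\<close> and \<open>t < 0\<close> to the upper and the lower
  bound on \<open>c\<close>.\<close>

lemma dominated_graph_extension_le:
  assumes graph: "dominated_graph V p G" and V: "lincomb_closed V" and p: "sublinear_on V p"
    and x: "x \<in> V"
    and lower: "\<And>y a. (y, a) \<in> G \<Longrightarrow> a - p (\<lambda>q. y q - x q) \<le> c"
    and upper: "\<And>y a. (y, a) \<in> G \<Longrightarrow> c \<le> p (\<lambda>q. y q + x q) - a"
    and ya: "(y, a) \<in> G"
  shows "a + t * c \<le> p (\<lambda>q. y q + t * x q)"
proof -
  have yV: "y \<in> V"
    using dominated_graph_in_V[OF graph ya] .
  consider "t = 0" | "t > 0" | "t < 0"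
    by linarith
  then show ?thesis
  proof cases
    case 1
    then show ?thesis
      using ya dominated_graph_le[OF graph] by simp
  next
    case 2
    have "c \<le> p (\<lambda>q. (1 / t) * y q + x q) - (1 / t) * a"
      using upper[OF dominated_graph_scale[OF graph ya, of "1 / t"]] .
    moreover have "(\<lambda>q. (1 / t) * y q + x q) \<in> V"
      using V yV x by (intro lincomb_closed_add lincomb_closed_scale)
    then have "t * p (\<lambda>q. (1 / t) * y q + x q) = p (\<lambda>q. t * ((1 / t) * y q + x q))"
      using sublinear_on_scale[OF p _ 2] by simp
    moreover have "(\<lambda>q. t * ((1 / t) * y q + x q)) = (\<lambda>q. y q + t * x q)"
      using 2 by (auto simp: field_simps)
    ultimately show ?thesis
      using 2 by (simp add: field_simps)
  next
    case 3
    have "(1 / (- t)) * a - p (\<lambda>q. (1 / (- t)) * y q - x q) \<le> c"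
      using lower[OF dominated_graph_scale[OF graph ya, of "1 / (- t)"]] .
    moreover have "(\<lambda>q. (1 / (- t)) * y q - x q) \<in> V"
      using V yV x by (intro lincomb_closed_diff lincomb_closed_scale)
    then have "(- t) * p (\<lambda>q. (1 / (- t)) * y q - x q) = p (\<lambda>q. (- t) * ((1 / (- t)) * y q - x q))"
      using sublinear_on_scale[OF p, of _ "- t"] 3 by simp
    moreover have "(\<lambda>q. (- t) * ((1 / (- t)) * y q - x q)) = (\<lambda>q. y q + t * x q)"
      using 3 by (auto simp: field_simps)
    ultimately show ?thesis
      using 3 by (simp add: field_simps)
  qed
qed

lemma dominated_graph_extend:
  assumes graph: "dominated_graph V p G" and V: "lincomb_closed V" and p: "sublinear_on V p"
    and x: "x \<in> V"
    and lower: "\<And>y a. (y, a) \<in> G \<Longrightarrow> a - p (\<lambda>q. y q - x q) \<le> c"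
    and upper: "\<And>y a. (y, a) \<in> G \<Longrightarrow> c \<le> p (\<lambda>q. y q + x q) - a"
  shows "dominated_graph V p {((\<lambda>q. y q + t * x q), a + t * c) | y a t. (y, a) \<in> G}"
  unfolding dominated_graph_def
proof (intro conjI allI impI subsetI)
  let ?G' = "{((\<lambda>q. y q + t * x q), a + t * c) | y a t. (y, a) \<in> G}"
  show "u \<in> V \<times> UNIV" if "u \<in> ?G'" for u
  proof -
    obtain y a t where "u = ((\<lambda>q. y q + t * x q), a + t * c)" "(y, a) \<in> G"
      using \<open>u \<in> ?G'\<close> by blast
    then show ?thesis
      using x dominated_graph_in_V[OF graph] V by (auto intro!: lincomb_closed_add lincomb_closed_scale)
  qed
  show "b \<le> p u" if "(u, b) \<in> ?G'" for u b
    using that dominated_graph_extension_le[OF graph V p x lower upper] by blast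
  fix u1 a1 u2 a2 s t
  assume "(u1, a1) \<in> ?G'" "(u2, a2) \<in> ?G'"
  then obtain y1 b1 t1 y2 b2 t2 where
    u: "u1 = (\<lambda>q. y1 q + t1 * x q)" "a1 = b1 + t1 * c" "(y1, b1) \<in> G"
       "u2 = (\<lambda>q. y2 q + t2 * x q)" "a2 = b2 + t2 * c" "(y2, b2) \<in> G"
    by blast
  have G'I: "((\<lambda>q. y q + r * x q), a + r * c) \<in> ?G'" if "(y, a) \<in> G" for y a r
    using that by blast
  have "((\<lambda>q. s * y1 q + t * y2 q), s * b1 + t * b2) \<in> G"
    using u by (intro dominated_graph_lincomb[OF graph])
  from G'I[OF this, of "s * t1 + t * t2"]
  have "((\<lambda>q. (s * y1 q + t * y2 q) + (s * t1 + t * t2) * x q),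
      (s * b1 + t * b2) + (s * t1 + t * t2) * c) \<in> ?G'" .
  moreover have "(\<lambda>q. (s * y1 q + t * y2 q) + (s * t1 + t * t2) * x q) = (\<lambda>q. s * u1 q + t * u2 q)"
    and "(s * b1 + t * b2) + (s * t1 + t * t2) * c = s * a1 + t * a2"
    using u by (auto simp: algebra_simps)
  ultimately show "((\<lambda>q. s * u1 q + t * u2 q), s * a1 + t * a2) \<in> ?G'"
    by simp
qed

lemma dominated_graph_of_functional:
  assumes "W \<subseteq> V" "lincomb_closed W" "linear_on W g" "\<forall>x\<in>W. g x \<le> p x"
  shows "dominated_graph V p {(x, g x) | x. x \<in> W}"
  unfolding dominated_graph_def
proof (intro conjI allI impI)
  show "{(x, g x) | x. x \<in> W} \<subseteq> V \<times> UNIV" and "\<And>x a. (x, a) \<in> {(x, g x) | x. x \<in> W} \<Longrightarrow> a \<le> p x"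
    using assms by auto
  fix x a y b s t
  assume "(x, a) \<in> {(x, g x) | x. x \<in> W}" "(y, b) \<in> {(x, g x) | x. x \<in> W}"
  then have "x \<in> W" "y \<in> W" "a = g x" "b = g y"
    by auto
  then show "((\<lambda>q. s * x q + t * y q), s * a + t * b) \<in> {(x, g x) | x. x \<in> W}"
    using lincomb_closedD[OF assms(2)] linear_onD[OF assms(3)] by auto
qed

lemma maximal_dominated_graph_exists:
  assumes "dominated_graph V p G0"
  obtains Gm where "dominated_graph V p Gm" "G0 \<subseteq> Gm" "\<And>G. dominated_graph V p G \<Longrightarrow> Gm \<subseteq> G \<Longrightarrow> G = Gm"
proof -
  define \<A> where "\<A> = {G. dominated_graph V p G \<and> G0 \<subseteq> G}"
  have "\<exists>U\<in>\<A>. \<forall>X\<in>C. X \<subseteq> U" if C: "C \<in> chains \<A>" for C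
  proof (cases "C = {}")
    case False
    have "C \<subseteq> \<A>" and chain: "\<And>G H. G \<in> C \<Longrightarrow> H \<in> C \<Longrightarrow> G \<subseteq> H \<or> H \<subseteq> G"
      using C by (auto simp: chains_def chain_subset_def)
    have "dominated_graph V p (\<Union>C)"
      using \<open>C \<subseteq> \<A>\<close> by (intro dominated_graph_chain_Union[OF False _ chain]) (auto simp: \<A>_def)
    moreover have "G0 \<subseteq> \<Union>C"
      using False \<open>C \<subseteq> \<A>\<close> unfolding \<A>_def by blast
    ultimately show ?thesis
      by (auto simp: \<A>_def)
  qed (use assms in \<open>auto simp: \<A>_def\<close>)
  then obtain Gm where "Gm \<in> \<A>" "\<forall>X\<in>\<A>. Gm \<subseteq> X \<longrightarrow> X = Gm"
    using Zorn_Lemma2[of \<A>] by blast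
  then show ?thesis
    by (intro that[of Gm]) (auto simp: \<A>_def)
qed

lemma maximal_dominated_graph_total:
  assumes graph: "dominated_graph V p G" and V: "lincomb_closed V" and p: "sublinear_on V p" and "G \<noteq> {}"
    and maximal: "\<And>G'. dominated_graph V p G' \<Longrightarrow> G \<subseteq> G' \<Longrightarrow> G' = G" and x: "x \<in> V"
  shows "\<exists>a. (x, a) \<in> G"
proof -
  obtain c where lower: "\<And>y a. (y, a) \<in> G \<Longrightarrow> a - p (\<lambda>q. y q - x q) \<le> c"
    and upper: "\<And>y a. (y, a) \<in> G \<Longrightarrow> c \<le> p (\<lambda>q. y q + x q) - a"
    using dominated_graph_extension_value[OF graph V p \<open>G \<noteq> {}\<close> x] by blast
  define G' where "G' = {((\<lambda>q. y q + t * x q), a + t * c) | y a t. (y, a) \<in> G}"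
  have G'I: "((\<lambda>q. y q + t * x q), a + t * c) \<in> G'" if "(y, a) \<in> G" for y a t
    using that by (auto simp: G'_def)
  have "G \<subseteq> G'"
    using G'I[of _ _ 0] by auto
  moreover have "dominated_graph V p G'"
    unfolding G'_def using graph V p x lower upper by (rule dominated_graph_extend)
  ultimately have "G' = G"
    by (rule maximal[rotated])
  moreover obtain y0 a0 where "(y0, a0) \<in> G"
    using \<open>G \<noteq> {}\<close> by auto
  then have "((\<lambda>q. 0 + 1 * x q), 0 + 1 * c) \<in> G'"
    by (intro G'I dominated_graph_zero[OF graph])
  ultimately show ?thesis
    by auto
qed

lemma total_dominated_graph_functional:
  assumes graph: "dominated_graph V p G" and V: "lincomb_closed V" and total: "\<forall>x\<in>V. \<exists>a. (x, a) \<in> G"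
  defines "\<psi> \<equiv> \<lambda>x. THE a. (x, a) \<in> G"
  shows "linear_on V \<psi>" "\<forall>x\<in>V. \<psi> x \<le> p x" "\<And>x a. (x, a) \<in> G \<Longrightarrow> \<psi> x = a"
proof -
  show \<psi>_eq: "\<psi> x = a" if "(x, a) \<in> G" for x a
    unfolding \<psi>_def using that dominated_graph_unique[OF graph] by (intro the_equality) blast+
  have \<psi>: "(x, \<psi> x) \<in> G" if "x \<in> V" for x
    using total that \<psi>_eq by blast
  show "\<forall>x\<in>V. \<psi> x \<le> p x"
    using \<psi> dominated_graph_le[OF graph] by blast
  show "linear_on V \<psi>"
    unfolding linear_on_def
  proof (intro ballI allI)
    fix x y s t
    assume "x \<in> V" "y \<in> V"
    then have "((\<lambda>q. s * x q + t * y q), s * \<psi> x + t * \<psi> y) \<in> G"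
      using dominated_graph_lincomb[OF graph \<psi> \<psi>] by blast
    then show "\<psi> (\<lambda>q. s * x q + t * y q) = s * \<psi> x + t * \<psi> y"
      by (rule \<psi>_eq)
  qed
qed

theorem hahn_banach:
  assumes V: "lincomb_closed V" and p: "sublinear_on V p"
    and W: "W \<subseteq> V" "lincomb_closed W" "W \<noteq> {}" and g: "linear_on W g" "\<forall>x\<in>W. g x \<le> p x"
  obtains \<psi> where "linear_on V \<psi>" "\<forall>x\<in>V. \<psi> x \<le> p x" "\<forall>x\<in>W. \<psi> x = g x"
proof -
  obtain G where graph: "dominated_graph V p G" and G0: "{(x, g x) | x. x \<in> W} \<subseteq> G"
    and maximal: "\<And>G'. dominated_graph V p G' \<Longrightarrow> G \<subseteq> G' \<Longrightarrow> G' = G"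
    using maximal_dominated_graph_exists[OF dominated_graph_of_functional[OF W(1,2) g]] by blast
  moreover have "G \<noteq> {}"
    using G0 \<open>W \<noteq> {}\<close> by blast
  ultimately have "\<forall>x\<in>V. \<exists>a. (x, a) \<in> G"
    using maximal_dominated_graph_total[OF graph V p] by blast
  note \<psi> = total_dominated_graph_functional[OF graph V this]
  show ?thesis
    using \<psi>(1,2) \<psi>(3)[of x "g x" for x] G0 by (intro that) auto
qed

section \<open>Lipschitz functions on a metric space\<close>

definition lipschitz_with :: "'a set \<Rightarrow> ('a \<Rightarrow> 'a \<Rightarrow> real) \<Rightarrow> real \<Rightarrow> ('a \<Rightarrow> real) \<Rightarrow> bool" where
  "lipschitz_with M d L f \<longleftrightarrow> (\<forall>x\<in>M. \<forall>y\<in>M. \<bar>f x - f y\<bar> \<le> L * d x y)"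

lemma mem_lip0_iff: "f \<in> lip0 M d z \<longleftrightarrow> f z = 0 \<and> (\<forall>x. x \<notin> M \<longrightarrow> f x = 0) \<and> (\<exists>L. lipschitz_with M d L f)"
  by (simp add: lip0_def lipschitz_with_def)

lemma lipschitz_withD: "lipschitz_with M d L f \<Longrightarrow> x \<in> M \<Longrightarrow> y \<in> M \<Longrightarrow> \<bar>f x - f y\<bar> \<le> L * d x y"
  by (simp add: lipschitz_with_def)

lemma lipschitz_with_subset: "lipschitz_with M d L f \<Longrightarrow> Q \<subseteq> M \<Longrightarrow> lipschitz_with Q d L f"
  by (auto simp: lipschitz_with_def)

lemma lipschitz_with_uminus: "lipschitz_with M d L f \<Longrightarrow> lipschitz_with M d L (\<lambda>x. - f x)"
  by (simp add: lipschitz_with_def abs_minus_commute)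

lemma lipschitz_with_lincomb:
  assumes "lipschitz_with M d L1 f" "lipschitz_with M d L2 g"
  shows "lipschitz_with M d (\<bar>a\<bar> * L1 + \<bar>b\<bar> * L2) (\<lambda>x. a * f x + b * g x)"
  unfolding lipschitz_with_def
proof (intro ballI)
  fix x y
  assume "x \<in> M" "y \<in> M"
  have "\<bar>(a * f x + b * g x) - (a * f y + b * g y)\<bar> \<le> \<bar>a\<bar> * \<bar>f x - f y\<bar> + \<bar>b\<bar> * \<bar>g x - g y\<bar>"
    by (simp add: abs_mult[symmetric] abs_triangle_ineq[THEN order_trans] algebra_simps)
  also have "\<dots> \<le> \<bar>a\<bar> * (L1 * d x y) + \<bar>b\<bar> * (L2 * d x y)"
    using assms \<open>x \<in> M\<close> \<open>y \<in> M\<close> by (intro add_mono mult_left_mono) (auto dest: lipschitz_withD)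
  finally show "\<bar>(a * f x + b * g x) - (a * f y + b * g y)\<bar> \<le> (\<bar>a\<bar> * L1 + \<bar>b\<bar> * L2) * d x y"
    by (simp add: algebra_simps)
qed

lemma lipschitz_with_convex_comb:
  assumes "\<forall>i<n. 0 \<le> lam i" "(\<Sum>i<n. lam i) = 1" "\<forall>i<n. lipschitz_with M d 1 (F i)"
  shows "lipschitz_with M d 1 (\<lambda>x. \<Sum>i<n. lam i * F i x)"
  unfolding lipschitz_with_def
proof (intro ballI)
  fix x y
  assume "x \<in> M" "y \<in> M"
  have "\<bar>(\<Sum>i<n. lam i * F i x) - (\<Sum>i<n. lam i * F i y)\<bar> = \<bar>\<Sum>i<n. lam i * (F i x - F i y)\<bar>"
    by (simp add: sum_subtractf[symmetric] algebra_simps)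
  also have "\<dots> \<le> (\<Sum>i<n. \<bar>lam i * (F i x - F i y)\<bar>)"
    by (rule sum_abs)
  also have "\<dots> \<le> (\<Sum>i<n. lam i * d x y)"
  proof (rule sum_mono)
    fix i
    assume "i \<in> {..<n}"
    then have "\<bar>F i x - F i y\<bar> \<le> d x y" "0 \<le> lam i"
      using assms lipschitz_withD[of M d 1 "F i" x y] \<open>x \<in> M\<close> \<open>y \<in> M\<close> by auto
    then show "\<bar>lam i * (F i x - F i y)\<bar> \<le> lam i * d x y"
      unfolding abs_mult by (intro mult_mono) auto
  qed
  also have "\<dots> = d x y"
    using assms by (simp add: sum_distrib_right[symmetric])
  finally show "\<bar>(\<Sum>i<n. lam i * F i x) - (\<Sum>i<n. lam i * F i y)\<bar> \<le> 1 * d x y"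
    by simp
qed

context Metric_space
begin

lemma lipschitz_with_mono: "L \<le> L' \<Longrightarrow> lipschitz_with M d L f \<Longrightarrow> lipschitz_with M d L' f"
  unfolding lipschitz_with_def by (meson mult_right_mono nonneg order_trans)

lemma lipnorm_set_bdd_above:
  assumes "lipschitz_with M d L f"
  shows "bdd_above ({\<bar>f x - f y\<bar> / d x y | x y. x \<in> M \<and> y \<in> M \<and> x \<noteq> y} \<union> {0})"
proof (rule bdd_aboveI)
  fix s
  assume "s \<in> {\<bar>f x - f y\<bar> / d x y | x y. x \<in> M \<and> y \<in> M \<and> x \<noteq> y} \<union> {0}"
  then consider "s = 0" | x y where "x \<in> M" "y \<in> M" "x \<noteq> y" "s = \<bar>f x - f y\<bar> / d x y"
    by blast
  then show "s \<le> max L 0"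
  proof cases
    case 2
    then have "s \<le> L"
      using assms mdist_pos_less[of x y] by (simp add: divide_le_eq lipschitz_withD)
    then show ?thesis
      by simp
  qed simp
qed

lemma lipnorm_nonneg: "lipschitz_with M d L f \<Longrightarrow> 0 \<le> lipnorm M d f"
  unfolding lipnorm_def by (rule cSup_upper[OF _ lipnorm_set_bdd_above]) simp_all

lemma quotient_le_lipnorm:
  assumes "lipschitz_with M d L f" "x \<in> M" "y \<in> M" "x \<noteq> y"
  shows "\<bar>f x - f y\<bar> / d x y \<le> lipnorm M d f"
  unfolding lipnorm_def by (rule cSup_upper[OF _ lipnorm_set_bdd_above[OF assms(1)]]) (use assms in blast)

lemma lipschitz_with_lipnorm:
  assumes "lipschitz_with M d L f"
  shows "lipschitz_with M d (lipnorm M d f) f"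
  unfolding lipschitz_with_def
proof (intro ballI)
  fix x y
  assume "x \<in> M" "y \<in> M"
  show "\<bar>f x - f y\<bar> \<le> lipnorm M d f * d x y"
  proof (cases "x = y")
    case False
    then show ?thesis
      using quotient_le_lipnorm[OF assms \<open>x \<in> M\<close> \<open>y \<in> M\<close>] mdist_pos_less[of x y] \<open>x \<in> M\<close> \<open>y \<in> M\<close>
      by (simp add: divide_le_eq)
  next
    case True
    then show ?thesis
      using \<open>y \<in> M\<close> by simp
  qed
qed

lemma lipnorm_le:
  assumes "0 \<le> L" "lipschitz_with M d L f"
  shows "lipnorm M d f \<le> L"
  unfolding lipnorm_def
proof (rule cSup_least)
  fix s
  assume "s \<in> {\<bar>f x - f y\<bar> / d x y | x y. x \<in> M \<and> y \<in> M \<and> x \<noteq> y} \<union> {0}"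
  then consider "s = 0" | x y where "x \<in> M" "y \<in> M" "x \<noteq> y" "s = \<bar>f x - f y\<bar> / d x y"
    by blast
  then show "s \<le> L"
  proof cases
    case 2
    then show ?thesis
      using assms mdist_pos_less[of x y] by (simp add: divide_le_eq lipschitz_withD)
  qed (use assms in simp)
qed simp

lemma lipnorm_gt_imp_pair:
  assumes "c < lipnorm M d f" "0 \<le> c"
  obtains x y where "x \<in> M" "y \<in> M" "x \<noteq> y" "c * d x y < f y - f x"
proof -
  obtain s where s: "s \<in> {\<bar>f x - f y\<bar> / d x y | x y. x \<in> M \<and> y \<in> M \<and> x \<noteq> y} \<union> {0}" "c < s"
    using assms(1) unfolding lipnorm_def by (rule less_cSupE) simp
  then obtain x y where xy: "x \<in> M" "y \<in> M" "x \<noteq> y" "c < \<bar>f x - f y\<bar> / d x y"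
    using assms(2) by auto
  then have "c * d x y < \<bar>f x - f y\<bar>"
    using mdist_pos_less[of x y] by (simp add: less_divide_eq)
  show ?thesis
  proof (cases "f x \<le> f y")
    case True
    with \<open>c * d x y < \<bar>f x - f y\<bar>\<close> show ?thesis
      using that[of x y] xy by simp
  next
    case False
    with \<open>c * d x y < \<bar>f x - f y\<bar>\<close> show ?thesis
      using that[of y x] xy commute[of x y] by simp
  qed
qed

lemma mem_lip0_ball_iff:
  "f \<in> lip0_ball M d z \<longleftrightarrow> f z = 0 \<and> (\<forall>x. x \<notin> M \<longrightarrow> f x = 0) \<and> lipschitz_with M d 1 f"
proof
  assume f: "f \<in> lip0_ball M d z"
  then obtain L where "lipschitz_with M d L f" "lipnorm M d f \<le> 1"
    by (auto simp: lip0_ball_def mem_lip0_iff)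
  then have "lipschitz_with M d 1 f"
    using lipschitz_with_mono lipschitz_with_lipnorm by blast
  with f show "f z = 0 \<and> (\<forall>x. x \<notin> M \<longrightarrow> f x = 0) \<and> lipschitz_with M d 1 f"
    by (simp add: lip0_ball_def mem_lip0_iff)
qed (auto simp: lip0_ball_def mem_lip0_iff intro: lipnorm_le)

lemma lip0_ball_lipschitz: "f \<in> lip0_ball M d z \<Longrightarrow> lipschitz_with M d 1 f"
  by (simp add: mem_lip0_ball_iff)

lemma lip0_ball_normalize:
  assumes "z \<in> M" "lipschitz_with M d 1 F"
  shows "(\<lambda>x. if x \<in> M then F x - F z else 0) \<in> lip0_ball M d z"
  using assms by (auto simp: mem_lip0_ball_iff lipschitz_with_def)

lemma bdd_below_lipschitz_plus_dist:
  assumes "Q \<subseteq> M" "q0 \<in> Q" "lipschitz_with Q d 1 F0" "x \<in> M"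
  shows "bdd_below ((\<lambda>q. F0 q + d x q) ` Q)"
proof (rule bdd_belowI2)
  fix q
  assume "q \<in> Q"
  then have "F0 q0 - F0 q \<le> d q0 q" "d q0 q \<le> d q0 x + d x q"
    using lipschitz_withD[OF assms(3,2) \<open>q \<in> Q\<close>] assms by (auto simp: abs_le_iff intro: triangle)
  then show "F0 q0 - d x q0 \<le> F0 q + d x q"
    using commute[of q0 x] by linarith
qed

lemma mcshane_extension:
  assumes "Q \<subseteq> M" "Q \<noteq> {}" and F0: "lipschitz_with Q d 1 F0"
  defines "F \<equiv> \<lambda>x. Inf ((\<lambda>q. F0 q + d x q) ` Q)"
  shows "lipschitz_with M d 1 F" and "\<And>x. x \<in> Q \<Longrightarrow> F x = F0 x"
proof -
  obtain q0 where "q0 \<in> Q"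
    using assms(2) by blast
  note bdd = bdd_below_lipschitz_plus_dist[OF assms(1) this F0]
  have step: "F x \<le> F y + d x y" if "x \<in> M" "y \<in> M" for x y
  proof -
    have "F x - d x y \<le> Inf ((\<lambda>q. F0 q + d y q) ` Q)"
    proof (rule cInf_greatest)
      fix s
      assume "s \<in> (\<lambda>q. F0 q + d y q) ` Q"
      then obtain q where q: "q \<in> Q" "s = F0 q + d y q"
        by blast
      have "F x \<le> F0 q + d x q"
        unfolding F_def using q bdd that by (intro cInf_lower) auto
      moreover have "d x q \<le> d x y + d y q"
        using that q assms(1) by (intro triangle) auto
      ultimately show "F x - d x y \<le> s"
        using q by linarith
    qed (use assms(2) in blast)
    then show ?thesis
      by (simp add: F_def)
  qed
  show "lipschitz_with M d 1 F"
    using step commute by (fastforce simp: lipschitz_with_def abs_le_iff)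
  show "F x = F0 x" if "x \<in> Q" for x
  proof (rule antisym)
    show "F x \<le> F0 x"
      unfolding F_def using that bdd[of x] assms(1) by (intro cInf_lower[THEN order_trans]) auto
    show "F0 x \<le> F x"
      unfolding F_def
    proof (rule cInf_greatest)
      fix s
      assume "s \<in> (\<lambda>q. F0 q + d x q) ` Q"
      then obtain q where "q \<in> Q" "s = F0 q + d x q"
        by blast
      moreover have "F0 x - F0 q \<le> d x q"
        using lipschitz_withD[OF F0 that \<open>q \<in> Q\<close>] by (simp add: abs_le_iff)
      ultimately show "F0 x \<le> s"
        by simp
    qed (use assms(2) in blast)
  qed
qed

text \<open>Extend first to \<open>a\<close> by the smallest 1-Lipschitz extension and then to all of \<open>M\<close>
  by McShane's largest one; the gap hypothesis is exactly what makes the value at \<open>b\<close> large enough.\<close>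

lemma two_point_extension:
  assumes "P \<subseteq> M" "P \<noteq> {}" and h: "lipschitz_with P d 1 h" and "a \<in> M" "b \<in> M" "\<gamma> \<le> 1"
    and gap: "\<forall>x\<in>P. \<forall>y\<in>P. h x - h y + \<gamma> * d a b \<le> d x a + d y b"
  obtains F where "lipschitz_with M d 1 F" "\<forall>x\<in>P. F x = h x" "\<gamma> * d a b \<le> F b - F a"
proof -
  define H where "H = (\<lambda>x. - Inf ((\<lambda>q. - h q + d x q) ` P))"
  have "lipschitz_with M d 1 (\<lambda>x. Inf ((\<lambda>q. - h q + d x q) ` P))"
    and H_P: "\<And>x. x \<in> P \<Longrightarrow> H x = h x"
    using mcshane_extension[OF assms(1,2) lipschitz_with_uminus[OF h]] by (auto simp: H_def)
  then have "lipschitz_with (insert a P) d 1 H"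
    unfolding H_def using assms(1,4) by (auto intro: lipschitz_with_subset lipschitz_with_uminus)
  moreover have "insert a P \<subseteq> M"
    using assms(1,4) by blast
  ultimately have F: "lipschitz_with M d 1 (\<lambda>x. Inf ((\<lambda>q. H q + d x q) ` insert a P))"
    and F_aP: "\<And>x. x \<in> insert a P \<Longrightarrow> Inf ((\<lambda>q. H q + d x q) ` insert a P) = H x"
    using mcshane_extension[of "insert a P" H] by auto
  have "H a + \<gamma> * d a b \<le> Inf ((\<lambda>q. H q + d b q) ` insert a P)"
  proof (rule cInf_greatest)
    fix s
    assume "s \<in> (\<lambda>q. H q + d b q) ` insert a P"
    then consider "s = H a + d b a" | q where "q \<in> P" "s = H q + d b q"
      by blast
    then show "H a + \<gamma> * d a b \<le> s"
    proof cases
      case 1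
      then show ?thesis
        using assms(6) commute[of a b] mult_right_mono[of \<gamma> 1 "d a b"] by simp
    next
      case 2
      have "\<gamma> * d a b - h q - d q b \<le> Inf ((\<lambda>x. - h x + d a x) ` P)"
        using gap 2(1) assms(2) commute[of a] by (intro cInf_greatest) (auto simp: algebra_simps)
      then show ?thesis
        using 2 H_P[OF 2(1)] commute[of b q] by (simp add: H_def)
    qed
  qed simp
  then show ?thesis
    using that[OF F] F_aP H_P by simp
qed

end

section \<open>Molecules and functionals on \<open>Lip\<^sub>0(M)\<close>\<close>

lemma mem_Mtilde: "(x, y) \<in> Mtilde M \<longleftrightarrow> x \<in> M \<and> y \<in> M \<and> x \<noteq> y"
  by (simp add: Mtilde_def)

lemma pi_set_subset: "A \<subseteq> Mtilde M \<Longrightarrow> pi_set A \<subseteq> M"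
  by (auto simp: pi_set_def Mtilde_def)

lemma fst_snd_in_pi_set: "p \<in> A \<Longrightarrow> fst p \<in> pi_set A \<and> snd p \<in> pi_set A"
  by (cases p) (auto simp: pi_set_def)

lemma molecule_val_lincomb:
  "molecule_val d (\<lambda>x. a * f x + b * g x) = (\<lambda>p. a * molecule_val d f p + b * molecule_val d g p)"
  by (simp add: fun_eq_iff molecule_val_def add_divide_distrib[symmetric] algebra_simps)

lemma molecule_val_shift:
  "f (fst p) = g (fst p) + c \<Longrightarrow> f (snd p) = g (snd p) + c \<Longrightarrow> molecule_val d f p = molecule_val d g p"
  by (simp add: molecule_val_def)

lemma lip0_dual_lincomb:
  "lip0_dual M d z \<phi> \<Longrightarrow> f \<in> lip0 M d z \<Longrightarrow> g \<in> lip0 M d z \<Longrightarrow>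
    \<phi> (\<lambda>x. a * f x + b * g x) = a * \<phi> f + b * \<phi> g"
  by (simp add: lip0_dual_def)

lemma lip0_dual_scale: "lip0_dual M d z \<phi> \<Longrightarrow> f \<in> lip0 M d z \<Longrightarrow> \<phi> (\<lambda>x. c * f x) = c * \<phi> f"
  using lip0_dual_lincomb[of M d z \<phi> f f c 0] by simp

context Metric_space
begin

lemma abs_molecule_val_le:
  assumes "lipschitz_with M d L f" "p \<in> Mtilde M"
  shows "\<bar>molecule_val d f p\<bar> \<le> L"
proof -
  obtain x y where "p = (x, y)" "x \<in> M" "y \<in> M" "x \<noteq> y"
    using assms(2) by (cases p) (auto simp: mem_Mtilde)
  then show ?thesis
    using lipschitz_withD[OF assms(1)] mdist_pos_less[of x y]
    by (simp add: molecule_val_def abs_div divide_le_eq)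
qed

lemma bounded_molecule_val: "f \<in> lip0 M d z \<Longrightarrow> bounded (molecule_val d f ` Mtilde M)"
  by (auto simp: mem_lip0_iff bounded_real dest: abs_molecule_val_le)

lemma lip0_lincomb: "f \<in> lip0 M d z \<Longrightarrow> g \<in> lip0 M d z \<Longrightarrow> (\<lambda>x. a * f x + b * g x) \<in> lip0 M d z"
  by (auto simp: mem_lip0_iff dest: lipschitz_with_lincomb)

lemma zero_in_lip0_ball: "(\<lambda>x. 0) \<in> lip0_ball M d z"
  by (simp add: mem_lip0_ball_iff lipschitz_with_def)

lemma inj_on_molecule_val:
  assumes "z \<in> M"
  shows "inj_on (molecule_val d) (lip0 M d z)"
proof (rule inj_onI)
  fix f g
  assume f: "f \<in> lip0 M d z" and g: "g \<in> lip0 M d z" and eq: "molecule_val d f = molecule_val d g"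
  show "f = g"
  proof
    fix x
    show "f x = g x"
    proof (cases "x \<in> M \<and> x \<noteq> z")
      case True
      then have "molecule_val d f (x, z) = molecule_val d g (x, z)" "d x z \<noteq> 0"
        using eq assms by auto
      then show ?thesis
        using f g by (simp add: molecule_val_def mem_lip0_iff)
    next
      case False
      then show ?thesis
        using f g by (auto simp: mem_lip0_iff)
    qed
  qed
qed

lemma lipnorm_le_Sup_molecule_val:
  assumes "Mtilde M \<noteq> {}" "f \<in> lip0 M d z"
  shows "lipnorm M d f \<le> Sup (molecule_val d f ` Mtilde M)"
proof -
  let ?S = "Sup (molecule_val d f ` Mtilde M)"
  have le_S: "molecule_val d f p \<le> ?S" if "p \<in> Mtilde M" for p
    using bounded_molecule_val[OF assms(2)] that by (intro cSup_upper bounded_imp_bdd_above) auto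
  have diff_le: "f x - f y \<le> ?S * d x y" if "x \<in> M" "y \<in> M" "x \<noteq> y" for x y
    using le_S[of "(x, y)"] that mdist_pos_less[of x y] by (simp add: mem_Mtilde molecule_val_def divide_le_eq)
  obtain x y where "(x, y) \<in> Mtilde M"
    using assms(1) by auto
  then have "x \<in> M" "y \<in> M" "x \<noteq> y"
    by (auto simp: mem_Mtilde)
  then have "0 \<le> ?S * d x y"
    using diff_le[of x y] diff_le[of y x] commute[of x y] by simp
  then have "0 \<le> ?S"
    using mdist_pos_less[OF \<open>x \<noteq> y\<close> \<open>x \<in> M\<close> \<open>y \<in> M\<close>] by (simp add: zero_le_mult_iff)
  moreover have "lipschitz_with M d ?S f"
    unfolding lipschitz_with_def
  proof (intro ballI)
    fix x y
    assume "x \<in> M" "y \<in> M"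
    then show "\<bar>f x - f y\<bar> \<le> ?S * d x y"
      using diff_le[of x y] diff_le[of y x] commute[of x y] by (cases "x = y") (auto simp: abs_le_iff)
  qed
  ultimately show ?thesis
    by (rule lipnorm_le)
qed

lemma abs_le_dual_norm:
  assumes "lip0_dual M d z \<phi>" "f \<in> lip0_ball M d z"
  shows "\<bar>\<phi> f\<bar> \<le> dual_norm M d z \<phi>"
proof -
  obtain C where C: "\<And>g. g \<in> lip0 M d z \<Longrightarrow> \<bar>\<phi> g\<bar> \<le> C * lipnorm M d g"
    using assms(1) unfolding lip0_dual_def by blast
  have "\<bar>\<phi> g\<bar> \<le> \<bar>C\<bar>" if "g \<in> lip0_ball M d z" for g
  proof -
    have "g \<in> lip0 M d z" "lipnorm M d g \<le> 1" "0 \<le> lipnorm M d g"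
      using that lipnorm_nonneg by (auto simp: lip0_ball_def mem_lip0_iff)
    then show ?thesis
      using C[of g] by (smt (verit) mult_left_le mult_right_mono abs_ge_self abs_ge_zero)
  qed
  then show ?thesis
    unfolding dual_norm_def using assms(2) by (intro cSup_upper bdd_aboveI2) auto
qed

lemma dual_le_lipnorm:
  assumes "z \<in> M" "lip0_dual M d z \<phi>" "dual_norm M d z \<phi> = 1" "f \<in> lip0 M d z"
  shows "\<phi> f \<le> lipnorm M d f"
proof -
  obtain L where L: "lipschitz_with M d L f" and f0: "f z = 0" "\<forall>x. x \<notin> M \<longrightarrow> f x = 0"
    using assms(4) by (auto simp: mem_lip0_iff)
  consider "lipnorm M d f = 0" | "lipnorm M d f > 0"
    using lipnorm_nonneg[OF L] by linarith
  then show ?thesis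
  proof cases
    case 1
    have "f x = 0 * f x" for x
      using lipschitz_withD[OF lipschitz_with_lipnorm[OF L] _ assms(1), of x] f0 1
      by (cases "x \<in> M") auto
    then have "\<phi> f = 0 * \<phi> f"
      using lip0_dual_scale[OF assms(2,4), of 0] by (metis ext)
    with 1 show ?thesis
      by simp
  next
    case 2
    define g where "g x = (1 / lipnorm M d f) * f x" for x
    have "lipschitz_with M d 1 g"
      unfolding lipschitz_with_def
    proof (intro ballI)
      fix x y
      assume "x \<in> M" "y \<in> M"
      then have "\<bar>f x - f y\<bar> \<le> lipnorm M d f * d x y"
        by (rule lipschitz_withD[OF lipschitz_with_lipnorm[OF L]])
      moreover have "\<bar>g x - g y\<bar> = \<bar>f x - f y\<bar> / lipnorm M d f"
        using 2 by (simp add: g_def diff_divide_distrib[symmetric])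
      ultimately show "\<bar>g x - g y\<bar> \<le> 1 * d x y"
        using 2 by (simp add: divide_le_eq mult.commute)
    qed
    then have "g \<in> lip0_ball M d z"
      using 2 f0 by (simp add: mem_lip0_ball_iff g_def)
    then have "\<phi> g \<le> 1"
      using abs_le_dual_norm[OF assms(2)] assms(3) by fastforce
    moreover have "\<phi> g = (1 / lipnorm M d f) * \<phi> f"
      unfolding g_def by (rule lip0_dual_scale[OF assms(2,4)])
    ultimately show ?thesis
      using 2 by (simp add: field_simps)
  qed
qed

lemma slice_nonempty:
  assumes "lip0_dual M d z \<phi>" "dual_norm M d z \<phi> = 1" "0 < \<alpha>"
  obtains f where "f \<in> slice M d z \<phi> \<alpha>"
proof -
  have "1 - \<alpha> < Sup ((\<lambda>f. \<bar>\<phi> f\<bar>) ` lip0_ball M d z)"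
    using assms(2,3) by (simp add: dual_norm_def)
  then obtain f where f: "f \<in> lip0_ball M d z" "1 - \<alpha> < \<bar>\<phi> f\<bar>"
    using zero_in_lip0_ball by (auto elim: less_cSupE)
  have neg: "(\<lambda>x. (-1) * f x) \<in> lip0_ball M d z" "\<phi> (\<lambda>x. (-1) * f x) = - \<phi> f"
    using f(1) by (simp add: mem_lip0_ball_iff lipschitz_with_def abs_minus_commute)
      (use lip0_dual_scale[OF assms(1), of f "-1"] f(1) in \<open>simp add: lip0_ball_def\<close>)
  show ?thesis
  proof (cases "0 \<le> \<phi> f")
    case True
    with f show ?thesis
      by (intro that) (simp add: slice_def)
  next
    case False
    with f show ?thesis
      using neg by (intro that[of "\<lambda>x. (-1) * f x"]) (simp add: slice_def)
  qed
qed

end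

section \<open>Positive finitely additive measures and norm-one functionals\<close>

lemma Phi_star_lip0_dual:
  assumes "Metric_space M d" "pos_ba (Mtilde M) \<mu>" "\<mu> (Mtilde M) = 1"
  shows "lip0_dual M d z (Phi_star M d \<mu>)"
proof -
  interpret Metric_space M d by (fact assms(1))
  interpret pos_ba "Mtilde M" \<mu> by (fact assms(2))
  have "\<bar>Phi_star M d \<mu> f\<bar> \<le> 1 * lipnorm M d f" if "f \<in> lip0 M d z" for f
    using that assms(3) abs_fa_integral_le[of "molecule_val d f" "lipnorm M d f"]
    by (auto simp: Phi_star_def mem_lip0_iff intro: abs_molecule_val_le lipschitz_with_lipnorm)
  moreover have "Phi_star M d \<mu> (\<lambda>x. a * f x + b * g x) = a * Phi_star M d \<mu> f + b * Phi_star M d \<mu> g"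
    if "f \<in> lip0 M d z" "g \<in> lip0 M d z" for f g a b
    using that by (simp add: Phi_star_def molecule_val_lincomb fa_integral_lincomb bounded_molecule_val)
  ultimately show ?thesis
    unfolding lip0_dual_def by blast
qed

lemma optimal_normalized_imp_dual:
  assumes "Metric_space M d" "optimal M d z \<mu>" "ba_norm (Mtilde M) \<mu> = 1"
  shows "pos_ba (Mtilde M) \<mu>" "\<mu> (Mtilde M) = 1"
    and "lip0_dual M d z (Phi_star M d \<mu>)" "dual_norm M d z (Phi_star M d \<mu>) = 1"
proof -
  show pos: "pos_ba (Mtilde M) \<mu>"
    using assms(2) by (simp add: optimal_def pos_ba_def)
  then show "\<mu> (Mtilde M) = 1"
    using assms(3) by (simp add: pos_ba.ba_norm_eq)
  then show "lip0_dual M d z (Phi_star M d \<mu>)"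
    using Phi_star_lip0_dual[OF assms(1) pos] by simp
  show "dual_norm M d z (Phi_star M d \<mu>) = 1"
    using assms(2,3) by (simp add: optimal_def)
qed

lemma dual_imp_optimal_normalized:
  assumes "pos_ba (Mtilde M) \<mu>" "\<mu> (Mtilde M) = 1" "dual_norm M d z \<phi> = 1"
    and "\<forall>f\<in>lip0 M d z. Phi_star M d \<mu> f = \<phi> f"
  shows "optimal M d z \<mu> \<and> ba_norm (Mtilde M) \<mu> = 1"
proof -
  have "dual_norm M d z (Phi_star M d \<mu>) = dual_norm M d z \<phi>"
    unfolding dual_norm_def using assms(4) by (auto simp: lip0_ball_def intro!: arg_cong[where f = Sup] image_cong)
  then show ?thesis
    using assms pos_ba.ba_norm_eq[OF assms(1)] by (simp add: optimal_def pos_ba_def)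
qed

lemma cSup_image_mult_pos:
  fixes h :: "'b \<Rightarrow> real"
  assumes "T \<noteq> {}" "bdd_above (h ` T)" "0 < c"
  shows "Sup ((\<lambda>q. c * h q) ` T) = c * Sup (h ` T)"
proof (rule antisym)
  show "Sup ((\<lambda>q. c * h q) ` T) \<le> c * Sup (h ` T)"
  proof (rule cSup_least)
    fix x
    assume "x \<in> (\<lambda>q. c * h q) ` T"
    then obtain q where "q \<in> T" "x = c * h q"
      by blast
    moreover have "h q \<le> Sup (h ` T)"
      using assms(2) \<open>q \<in> T\<close> by (intro cSup_upper) auto
    ultimately show "x \<le> c * Sup (h ` T)"
      using assms(3) by simp
  qed (use assms(1) in blast)
  obtain B where "\<forall>x\<in>T. h x \<le> B"
    using assms(2) by (auto simp: bdd_above_def)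
  then have "bdd_above ((\<lambda>q. c * h q) ` T)"
    using assms(3) by (intro bdd_aboveI2[of _ _ "c * B"]) simp
  then have "Sup (h ` T) \<le> Sup ((\<lambda>q. c * h q) ` T) / c"
    using assms by (intro cSup_least) (auto simp: le_divide_eq mult.commute intro: cSup_upper)
  then show "c * Sup (h ` T) \<le> Sup ((\<lambda>q. c * h q) ` T)"
    using assms(3) by (simp add: le_divide_eq mult.commute)
qed

lemma sublinear_on_Sup:
  fixes T :: "'b set"
  assumes "T \<noteq> {}"
  shows "sublinear_on {h. bounded (h ` T)} (\<lambda>h. Sup (h ` T))"
  unfolding sublinear_on_def
proof (intro conjI ballI allI impI)
  fix h k :: "'b \<Rightarrow> real"
  assume "h \<in> {h. bounded (h ` T)}" "k \<in> {h. bounded (h ` T)}"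
  then have "bdd_above (h ` T)" "bdd_above (k ` T)"
    by (auto intro: bounded_imp_bdd_above)
  then show "Sup ((\<lambda>q. h q + k q) ` T) \<le> Sup (h ` T) + Sup (k ` T)"
    using assms by (intro cSup_least) (auto intro!: add_mono cSup_upper)
next
  fix h :: "'b \<Rightarrow> real" and c :: real
  assume "h \<in> {h. bounded (h ` T)}" "0 < c"
  then have "bdd_above (h ` T)"
    by (auto intro: bounded_imp_bdd_above)
  from assms this \<open>0 < c\<close> show "Sup ((\<lambda>q. c * h q) ` T) = c * Sup (h ` T)"
    by (rule cSup_image_mult_pos)
qed

lemma bounded_indicator: "bounded (indicator A ` T :: real set)"
  by (auto simp: bounded_real indicator_def intro!: exI[of _ 1])

lemma bounded_lincomb_indicator: "bounded ((\<lambda>q. \<Sum>c\<in>F. w c * indicator (B c) q :: real) ` T)"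
  unfolding bounded_real
proof (intro exI ballI)
  fix x
  assume "x \<in> (\<lambda>q. \<Sum>c\<in>F. w c * indicator (B c) q) ` T"
  then obtain q where "x = (\<Sum>c\<in>F. w c * indicator (B c) q)"
    by blast
  also have "\<bar>\<dots>\<bar> \<le> (\<Sum>c\<in>F. \<bar>w c * indicator (B c) q\<bar>)"
    by (rule sum_abs)
  also have "\<dots> \<le> (\<Sum>c\<in>F. \<bar>w c\<bar>)"
    by (rule sum_mono) (simp add: abs_mult indicator_def)
  finally show "\<bar>x\<bar> \<le> (\<Sum>c\<in>F. \<bar>w c\<bar>)" .
qed

text \<open>A linear functional on the bounded functions on \<open>T\<close> that is dominated by the supremum is
  positive and normalised, hence integration against the finitely additive measure
  \<open>A \<mapsto> \<psi> (indicator A)\<close>.\<close>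

context
  fixes T :: "'b set" and \<psi> :: "('b \<Rightarrow> real) \<Rightarrow> real"
  assumes T: "T \<noteq> {}" and linear: "linear_on {h. bounded (h ` T)} \<psi>"
    and dominated: "\<And>h. bounded (h ` T) \<Longrightarrow> \<psi> h \<le> Sup (h ` T)"
begin

lemma dominated_functional_le: "bounded (h ` T) \<Longrightarrow> (\<And>q. q \<in> T \<Longrightarrow> h q \<le> c) \<Longrightarrow> \<psi> h \<le> c"
  using dominated[of h] T by (smt (verit) cSup_least image_iff image_is_empty)

lemma dominated_functional_ge:
  assumes "bounded (h ` T)" "\<And>q. q \<in> T \<Longrightarrow> c \<le> h q"
  shows "c \<le> \<psi> h"
proof -
  have "\<psi> (\<lambda>q. (-1) * h q) \<le> - c"
    using assms by (intro dominated_functional_le) (auto simp: bounded_scaleR_comp[of h T "-1", simplified])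
  then show ?thesis
    using linear_on_scale[OF linear, of h "-1"] assms(1) by simp
qed

lemma dominated_functional_cong:
  assumes "bounded (h ` T)" "bounded (k ` T)" "\<And>q. q \<in> T \<Longrightarrow> h q = k q"
  shows "\<psi> h = \<psi> k"
proof -
  have "bounded ((\<lambda>q. h q - k q) ` T)"
    using assms by (intro bounded_minus_comp)
  then have "\<psi> (\<lambda>q. h q - k q) = 0"
    using assms(3) by (intro antisym dominated_functional_le dominated_functional_ge) auto
  then show ?thesis
    using linear_on_diff[OF linear, of h k] assms(1,2) by simp
qed

lemma pos_ba_indicator_functional: "pos_ba T (\<lambda>A. \<psi> (indicator A))"
proof
  show "positive_ba T (\<lambda>A. \<psi> (indicator A))"
    unfolding positive_ba_def
    by (auto intro!: dominated_functional_ge bounded_indicator)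
  have "\<psi> (indicator (A \<union> B)) = \<psi> (indicator A) + \<psi> (indicator B)" if "A \<inter> B = {}" for A B
  proof -
    have "indicator (A \<union> B) = (\<lambda>q. 1 * indicator A q + 1 * indicator B q :: real)"
      by (rule ext) (use that in \<open>auto simp: indicator_def\<close>)
    then show ?thesis
      using linear_onD[OF linear, of "indicator A" "indicator B" 1 1] by (simp add: bounded_indicator)
  qed
  moreover have "\<bar>\<psi> (indicator A)\<bar> \<le> 1" for A
  proof -
    have "\<psi> (indicator A) \<le> 1"
      by (rule dominated_functional_le[OF bounded_indicator]) (simp add: indicator_def)
    moreover have "-1 \<le> \<psi> (indicator A)"
      by (rule dominated_functional_ge[OF bounded_indicator]) (simp add: indicator_def)
    ultimately show ?thesis
      by simp
  qed
  ultimately show "is_ba T (\<lambda>A. \<psi> (indicator A))"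
    unfolding is_ba_def by blast
qed

lemma indicator_functional_total: "\<psi> (indicator T) = 1"
proof (rule antisym)
  show "\<psi> (indicator T) \<le> 1"
    by (rule dominated_functional_le[OF bounded_indicator]) simp
  show "1 \<le> \<psi> (indicator T)"
    by (rule dominated_functional_ge[OF bounded_indicator]) simp
qed

lemma dominated_functional_sum:
  "finite F \<Longrightarrow> \<psi> (\<lambda>q. \<Sum>c\<in>F. w c * indicator (B c) q) = (\<Sum>c\<in>F. w c * \<psi> (indicator (B c)))"
proof (induction F rule: finite_induct)
  case empty
  then show ?case
    using linear_on_scale[OF linear, of "\<lambda>q. 0" 0] by (simp add: bounded_const_image)
next
  case (insert c F)
  have eq: "(\<lambda>q. \<Sum>c'\<in>insert c F. w c' * indicator (B c') q)
      = (\<lambda>q. w c * indicator (B c) q + 1 * (\<Sum>c'\<in>F. w c' * indicator (B c') q))"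
    by (rule ext) (simp only: sum.insert[OF insert.hyps] mult_1_left)
  have "\<psi> (\<lambda>q. w c * indicator (B c) q + 1 * (\<Sum>c'\<in>F. w c' * indicator (B c') q))
      = w c * \<psi> (indicator (B c)) + 1 * \<psi> (\<lambda>q. \<Sum>c'\<in>F. w c' * indicator (B c') q)"
    using bounded_indicator bounded_lincomb_indicator by (intro linear_onD[OF linear]) auto
  then show ?case
    unfolding eq using insert.IH by (simp add: sum.insert[OF insert.hyps])
qed

lemma dominated_functional_simple:
  assumes "finite (s ` T)"
  shows "\<psi> s = fa_simple_integral T (\<lambda>A. \<psi> (indicator A)) s"
proof -
  have "\<psi> s = \<psi> (\<lambda>q. \<Sum>c\<in>s ` T. c * indicator {p\<in>T. s p = c} q)"
  proof (rule dominated_functional_cong)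
    show "bounded (s ` T)"
      using assms by (rule finite_imp_bounded)
    show "s q = (\<Sum>c\<in>s ` T. c * indicator {p\<in>T. s p = c} q)" if "q \<in> T" for q
    proof -
      have "(\<Sum>c\<in>s ` T. c * indicator {p\<in>T. s p = c} q) = (\<Sum>c\<in>s ` T. if c = s q then c else 0)"
        using that by (intro sum.cong) (auto simp: indicator_def)
      also have "\<dots> = s q"
        using assms that by (simp add: sum.delta)
      finally show ?thesis ..
    qed
  qed (rule bounded_lincomb_indicator)
  also have "\<dots> = fa_simple_integral T (\<lambda>A. \<psi> (indicator A)) s"
    using dominated_functional_sum[OF assms] by (simp add: fa_simple_integral_def)
  finally show ?thesis .
qed

lemma dominated_functional_eq_fa_integral:
  assumes h: "bounded (h ` T)"
  shows "fa_integral T (\<lambda>A. \<psi> (indicator A)) h = \<psi> h"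
proof -
  interpret pos_ba T "\<lambda>A. \<psi> (indicator A)"
    by (rule pos_ba_indicator_functional)
  have "\<bar>fa_integral T (\<lambda>A. \<psi> (indicator A)) h - \<psi> h\<bar> \<le> 0 + 2 * inverse (real (Suc k))" for k
  proof -
    let ?s = "floor_approx k h" and ?\<delta> = "inverse (real (Suc k))"
    have s: "finite (?s ` T)"
      using h by (rule finite_floor_approx_image)
    have close: "\<forall>p\<in>T. \<bar>h p - ?s p\<bar> \<le> ?\<delta>"
      by (intro ballI abs_floor_approx_le)
    have "\<bar>fa_integral T (\<lambda>A. \<psi> (indicator A)) h - \<psi> ?s\<bar> \<le> ?\<delta>"
      using fa_integral_approx[OF h s close] dominated_functional_simple[OF s] indicator_functional_total
      by simp
    moreover have diff: "bounded ((\<lambda>q. h q - ?s q) ` T)"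
      using h finite_imp_bounded[OF s] by (rule bounded_minus_comp)
    have "\<psi> (\<lambda>q. h q - ?s q) \<le> ?\<delta>" "- ?\<delta> \<le> \<psi> (\<lambda>q. h q - ?s q)"
      using close by (auto intro!: dominated_functional_le[OF diff] dominated_functional_ge[OF diff]
          simp: abs_le_iff)
    then have "\<bar>\<psi> h - \<psi> ?s\<bar> \<le> ?\<delta>"
      using linear_on_diff[OF linear, of h ?s] h finite_imp_bounded[OF s] by (simp add: abs_le_iff)
    ultimately show ?thesis
      by linarith
  qed
  then show ?thesis
    using le_if_le_plus_inverse_Suc by (metis abs_le_zero_iff eq_iff_diff_eq_0)
qed

end

lemma represent_dual:
  assumes "Metric_space M d" "z \<in> M" "Mtilde M \<noteq> {}" "lip0_dual M d z \<phi>" "dual_norm M d z \<phi> = 1"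
  obtains \<mu> where "pos_ba (Mtilde M) \<mu>" "\<mu> (Mtilde M) = 1" "\<forall>f\<in>lip0 M d z. Phi_star M d \<mu> f = \<phi> f"
proof -
  interpret Metric_space M d by (fact assms(1))
  define V where "V = {h :: 'a \<times> 'a \<Rightarrow> real. bounded (h ` Mtilde M)}"
  define W where "W = molecule_val d ` lip0 M d z"
  define g where "g w = \<phi> (inv_into (lip0 M d z) (molecule_val d) w)" for w
  have g_mol: "g (molecule_val d f) = \<phi> f" if "f \<in> lip0 M d z" for f
    using inv_into_f_f[OF inj_on_molecule_val[OF assms(2)] that] by (simp add: g_def)
  note mol_lincomb = molecule_val_lincomb[symmetric]
  have "lincomb_closed V"
    by (auto simp: lincomb_closed_def V_def intro: bounded_lincomb_comp)
  moreover have "W \<subseteq> V"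
    by (auto simp: V_def W_def bounded_molecule_val)
  moreover have "lincomb_closed W"
    by (auto simp: lincomb_closed_def W_def mol_lincomb intro: lip0_lincomb)
  moreover have "linear_on W g"
    by (auto simp: linear_on_def W_def mol_lincomb g_mol lip0_lincomb lip0_dual_lincomb[OF assms(4)])
  moreover have "\<forall>w\<in>W. g w \<le> Sup (w ` Mtilde M)"
    using dual_le_lipnorm[OF assms(2,4,5)] lipnorm_le_Sup_molecule_val[OF assms(3)]
    by (auto simp: W_def g_mol intro: order_trans)
  moreover have "W \<noteq> {}"
    using zero_in_lip0_ball by (auto simp: W_def lip0_ball_def)
  ultimately obtain \<psi> where lin: "linear_on V \<psi>" and dom: "\<forall>h\<in>V. \<psi> h \<le> Sup (h ` Mtilde M)"
    and ext: "\<forall>w\<in>W. \<psi> w = g w"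
    using hahn_banach[OF _ sublinear_on_Sup[OF assms(3)]] unfolding V_def by blast
  have lin': "linear_on {h. bounded (h ` Mtilde M)} \<psi>"
    and dom': "\<And>h. bounded (h ` Mtilde M) \<Longrightarrow> \<psi> h \<le> Sup (h ` Mtilde M)"
    using lin dom by (auto simp: V_def)
  show ?thesis
  proof (rule that)
    show "pos_ba (Mtilde M) (\<lambda>A. \<psi> (indicator A))" "\<psi> (indicator (Mtilde M)) = 1"
      using pos_ba_indicator_functional[OF assms(3) lin' dom'] indicator_functional_total[OF assms(3) lin' dom']
      by auto
    show "\<forall>f\<in>lip0 M d z. Phi_star M d (\<lambda>A. \<psi> (indicator A)) f = \<phi> f"
      using dominated_functional_eq_fa_integral[OF assms(3) lin' dom'] ext g_mol
      by (auto simp: W_def Phi_star_def bounded_molecule_val)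
  qed
qed

section \<open>The characterisation\<close>

definition gap_witnesses ::
  "'a set \<Rightarrow> ('a \<Rightarrow> 'a \<Rightarrow> real) \<Rightarrow> 'a \<Rightarrow> nat \<Rightarrow> (nat \<Rightarrow> ('a \<times> 'a) set \<Rightarrow> real) \<Rightarrow> real \<Rightarrow> bool" where
  "gap_witnesses M d z n \<mu> \<gamma> \<longleftrightarrow>
     (\<exists>(A :: nat \<Rightarrow> ('a \<times> 'a) set) (f :: nat \<Rightarrow> 'a \<Rightarrow> real) (g :: nat \<Rightarrow> 'a \<Rightarrow> real) u v.
          (\<forall>i<n. A i \<subseteq> Mtilde M \<and> \<mu> i (A i) \<ge> \<gamma> \<and>
                 f i \<in> lip0_ball M d z \<and> g i \<in> lip0_ball M d z) \<and>
          u \<in> M \<and> v \<in> M \<and> u \<noteq> v \<and>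
          (\<forall>i<n. \<forall>p\<in>A i. molecule_val d (f i) p \<ge> \<gamma> \<and> molecule_val d (g i) p \<ge> \<gamma>) \<and>
          (\<forall>i<n. \<forall>x\<in>pi_set (A i). \<forall>y\<in>pi_set (A i).
              max (f i x - f i y) (g i y - g i x) + \<gamma> * d u v \<le> d x u + d y v))"

lemma each_gt_if_sum_gt:
  fixes a :: "nat \<Rightarrow> real"
  assumes "\<forall>j<n. a j \<le> B" "real n * B - e < (\<Sum>j<n. a j)" "i < n"
  shows "B - e < a i"
proof -
  have "(\<Sum>j<n. a j) = a i + (\<Sum>j\<in>{..<n} - {i}. a j)"
    using assms(3) by (simp add: sum.remove)
  also have "(\<Sum>j\<in>{..<n} - {i}. a j) \<le> real (n - 1) * B"
    using assms(1,3) sum_bounded_above[of "{..<n} - {i}" a B] by simp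
  finally show ?thesis
    using assms(2,3) by (simp add: of_nat_diff algebra_simps)
qed

lemma convex_comb_sets_nonempty:
  assumes "\<forall>i<n. S i \<noteq> {}"
  shows "convex_comb_sets n lam S \<noteq> {}"
proof -
  from assms have "\<forall>i\<in>{..<n}. \<exists>f. f \<in> S i"
    by auto
  then obtain F where "\<forall>i\<in>{..<n}. F i \<in> S i"
    by (auto dest!: bchoice)
  then show ?thesis
    by (auto simp: convex_comb_sets_def)
qed

lemma lip_diam_gt:
  assumes "lip_diam M d S = c" "S \<noteq> {}" "e < c"
  obtains f g where "f \<in> S" "g \<in> S" "e < lipnorm M d (\<lambda>x. f x - g x)"
proof -
  have "{lipnorm M d (\<lambda>x. f x - g x) | f g. f \<in> S \<and> g \<in> S} \<noteq> {}"
    using assms(2) by blast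
  then show ?thesis
    using assms(1,3) that unfolding lip_diam_def by (auto elim: less_cSupE)
qed

context Metric_space
begin

lemma SD2P_lip0_far_pair:
  assumes SD: "SD2P_lip0 M d z" and "1 \<le> n" and \<phi>: "\<forall>i<n. lip0_dual M d z (\<phi> i) \<and> dual_norm M d z (\<phi> i) = 1"
    and "0 < \<alpha>" "0 < \<delta>" "\<delta> \<le> 2"
  obtains P Q u v where "\<forall>i<n. P i \<in> slice M d z (\<phi> i) \<alpha> \<and> Q i \<in> slice M d z (\<phi> i) \<alpha>"
    "u \<in> M" "v \<in> M" "u \<noteq> v"
    "(2 - \<delta>) * d u v < (\<Sum>i<n. (1 / real n) * ((P i v - P i u) + (Q i u - Q i v)))"
proof -
  define S where "S = convex_comb_sets n (\<lambda>i. 1 / real n) (\<lambda>i. slice M d z (\<phi> i) \<alpha>)"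
  have diam: "lip_diam M d S = 2"
    using SD[unfolded SD2P_lip0_def, rule_format, of n "\<lambda>i. 1 / real n" \<phi> "\<lambda>i. \<alpha>"] assms(2-4)
    by (auto simp: S_def)
  have "S \<noteq> {}"
    unfolding S_def using \<phi> \<open>0 < \<alpha>\<close> by (intro convex_comb_sets_nonempty) (metis empty_iff slice_nonempty)
  then obtain h1 h2 where "h1 \<in> S" "h2 \<in> S" "2 - \<delta> < lipnorm M d (\<lambda>x. h1 x - h2 x)"
    using diam \<open>0 < \<delta>\<close> lip_diam_gt[of M d S 2 "2 - \<delta>"] by auto
  then obtain u v where uv: "u \<in> M" "v \<in> M" "v \<noteq> u" "(2 - \<delta>) * d v u < (h1 u - h2 u) - (h1 v - h2 v)"
    using \<open>\<delta> \<le> 2\<close> by (elim lipnorm_gt_imp_pair) auto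
  obtain P Q where h: "h1 = (\<lambda>x. \<Sum>i<n. (1 / real n) * P i x)" "h2 = (\<lambda>x. \<Sum>i<n. (1 / real n) * Q i x)"
    and PQ: "\<forall>i<n. P i \<in> slice M d z (\<phi> i) \<alpha> \<and> Q i \<in> slice M d z (\<phi> i) \<alpha>"
    using \<open>h1 \<in> S\<close> \<open>h2 \<in> S\<close> unfolding S_def convex_comb_sets_def by blast
  have "(h1 u - h2 u) - (h1 v - h2 v) = (\<Sum>i<n. (1 / real n) * ((P i u - P i v) + (Q i v - Q i u)))"
    unfolding h by (simp add: sum_subtractf[symmetric] sum.distrib[symmetric] algebra_simps)
  with uv PQ show ?thesis
    using that[of P Q v u] commute[of u v] by simp
qed

lemma gaps_from_average:
  assumes "\<forall>i<n. lipschitz_with M d 1 (P i) \<and> lipschitz_with M d 1 (Q i)" "u \<in> M" "v \<in> M"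
    and "(2 - (1 - \<gamma>) / real n) * d u v < (\<Sum>i<n. (1 / real n) * ((P i v - P i u) + (Q i u - Q i v)))"
    and "i < n"
  shows "\<gamma> * d u v < P i v - P i u" "\<gamma> * d u v < Q i u - Q i v"
proof -
  define a where "a j = (P j v - P j u) + (Q j u - Q j v)" for j
  have le: "P j v - P j u \<le> d u v" "Q j u - Q j v \<le> d u v" if "j < n" for j
    using assms(1-3) that lipschitz_withD[of M d 1 "P j" v u] lipschitz_withD[of M d 1 "Q j" u v] commute[of u v]
    by (auto simp: abs_le_iff)
  have n: "0 < real n"
    using assms(5) by simp
  have "(2 - (1 - \<gamma>) / real n) * d u v < (\<Sum>j<n. a j) / real n"
    using assms(4) by (simp add: a_def sum_divide_distrib)
  then have "real n * ((2 - (1 - \<gamma>) / real n) * d u v) < real n * ((\<Sum>j<n. a j) / real n)"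
    using n by (rule mult_strict_left_mono)
  moreover have "real n * ((2 - (1 - \<gamma>) / real n) * d u v) = real n * (2 * d u v) - (1 - \<gamma>) * d u v"
    using n by (simp add: field_simps)
  ultimately have "real n * (2 * d u v) - (1 - \<gamma>) * d u v < (\<Sum>j<n. a j)"
    using n by simp
  moreover have "\<forall>j<n. a j \<le> 2 * d u v"
  proof (intro allI impI)
    fix j
    assume "j < n"
    from le[OF this] show "a j \<le> 2 * d u v"
      by (simp add: a_def)
  qed
  ultimately have "2 * d u v - (1 - \<gamma>) * d u v < a i"
    using assms(5) by (intro each_gt_if_sum_gt) auto
  then show "\<gamma> * d u v < P i v - P i u" "\<gamma> * d u v < Q i u - Q i v"
    using le[OF assms(5)] by (auto simp: a_def algebra_simps)
qed

lemma molecule_measure_small: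
  assumes "pos_ba (Mtilde M) \<mu>" "\<mu> (Mtilde M) = 1" "f \<in> lip0_ball M d z"
    and "1 - \<alpha> < Phi_star M d \<mu> f" "\<gamma> < 1"
  shows "\<mu> {p\<in>Mtilde M. molecule_val d f p < \<gamma>} < \<alpha> / (1 - \<gamma>)"
proof -
  interpret pos_ba "Mtilde M" \<mu> by (fact assms(1))
  define B where "B = {p\<in>Mtilde M. molecule_val d f p < \<gamma>}"
  have f: "lipschitz_with M d 1 f" "f \<in> lip0 M d z"
    using lip0_ball_lipschitz[OF assms(3)] assms(3) by (auto simp: lip0_ball_def)
  have "Phi_star M d \<mu> f \<le> fa_integral (Mtilde M) \<mu> (\<lambda>p. 1 * 1 + (\<gamma> - 1) * indicator B p)"
    unfolding Phi_star_def
  proof (rule fa_integral_mono)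
    show "molecule_val d f p \<le> 1 * 1 + (\<gamma> - 1) * indicator B p" if "p \<in> Mtilde M" for p
      using abs_molecule_val_le[OF f(1) that] that by (auto simp: B_def indicator_def)
  qed (intro bounded_molecule_val[OF f(2)] bounded_lincomb_comp bounded_const_image bounded_indicator)+
  also have "\<dots> = 1 + (\<gamma> - 1) * \<mu> B"
    using fa_integral_lincomb[OF bounded_const_image[of 1] bounded_indicator[of B], of 1 "\<gamma> - 1"]
      fa_integral_const fa_integral_indicator[of B] assms(2) by (simp add: B_def)
  finally show ?thesis
    using assms(4,5) by (simp add: B_def field_simps)
qed

lemma slices_measure_large:
  assumes "pos_ba (Mtilde M) \<mu>" "\<mu> (Mtilde M) = 1" "P \<in> lip0_ball M d z" "Q \<in> lip0_ball M d z"
    and "1 - (1 - \<gamma>)\<^sup>2 / 2 < Phi_star M d \<mu> P" "1 - (1 - \<gamma>)\<^sup>2 / 2 < Phi_star M d \<mu> Q" "\<gamma> < 1"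
  shows "\<gamma> \<le> \<mu> {p\<in>Mtilde M. \<gamma> \<le> molecule_val d P p \<and> \<gamma> \<le> molecule_val d Q p}"
proof -
  interpret pos_ba "Mtilde M" \<mu> by (fact assms(1))
  define A where "A = {p\<in>Mtilde M. \<gamma> \<le> molecule_val d P p \<and> \<gamma> \<le> molecule_val d Q p}"
  have "\<gamma> \<noteq> 1"
    using assms(7) by simp
  then have eq: "(1 - \<gamma>)\<^sup>2 / 2 / (1 - \<gamma>) = (1 - \<gamma>) / 2"
    by (simp add: power2_eq_square field_simps)
  have "\<mu> {p\<in>Mtilde M. molecule_val d P p < \<gamma>} < (1 - \<gamma>) / 2"
    using molecule_measure_small[OF assms(1-3,5,7)] unfolding eq .
  moreover have "\<mu> {p\<in>Mtilde M. molecule_val d Q p < \<gamma>} < (1 - \<gamma>) / 2"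
    using molecule_measure_small[OF assms(1,2,4,6,7)] unfolding eq .
  moreover have "Mtilde M - A = {p\<in>Mtilde M. molecule_val d P p < \<gamma>} \<union> {p\<in>Mtilde M. molecule_val d Q p < \<gamma>}"
    by (auto simp: A_def)
  then have "\<mu> (Mtilde M - A) \<le> \<mu> {p\<in>Mtilde M. molecule_val d P p < \<gamma>} + \<mu> {p\<in>Mtilde M. molecule_val d Q p < \<gamma>}"
    by (simp add: Un_le)
  moreover have "\<mu> (Mtilde M - A) = 1 - \<mu> A"
    using Diff[of A "Mtilde M"] assms(2) by (simp add: A_def)
  ultimately show ?thesis
    by (simp add: A_def)
qed

lemma gap_max_le:
  assumes "lipschitz_with M d 1 f" "lipschitz_with M d 1 g" "x \<in> M" "y \<in> M" "u \<in> M" "v \<in> M"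
    and "\<gamma> * d u v \<le> f v - f u" "\<gamma> * d u v \<le> g u - g v"
  shows "max (f x - f y) (g y - g x) + \<gamma> * d u v \<le> d x u + d y v"
  using lipschitz_withD[OF assms(1) \<open>x \<in> M\<close> \<open>u \<in> M\<close>] lipschitz_withD[OF assms(1) \<open>v \<in> M\<close> \<open>y \<in> M\<close>]
    lipschitz_withD[OF assms(2) \<open>y \<in> M\<close> \<open>v \<in> M\<close>] lipschitz_withD[OF assms(2) \<open>u \<in> M\<close> \<open>x \<in> M\<close>]
    assms(7,8) commute[of v y] commute[of u x]
  by (auto simp: abs_le_iff)

lemma SD2P_lip0_imp_gap_witnesses:
  assumes SD: "SD2P_lip0 M d z" and "1 \<le> n" and opt: "\<forall>i<n. optimal M d z (\<mu> i) \<and> ba_norm (Mtilde M) (\<mu> i) = 1"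
    and "0 < \<gamma>" "\<gamma> < 1"
  shows "gap_witnesses M d z n \<mu> \<gamma>"
proof -
  have \<mu>: "pos_ba (Mtilde M) (\<mu> i)" "\<mu> i (Mtilde M) = 1"
    "lip0_dual M d z (Phi_star M d (\<mu> i))" "dual_norm M d z (Phi_star M d (\<mu> i)) = 1" if "i < n" for i
  proof -
    have "optimal M d z (\<mu> i)" "ba_norm (Mtilde M) (\<mu> i) = 1"
      using opt that by auto
    then show "pos_ba (Mtilde M) (\<mu> i)" "\<mu> i (Mtilde M) = 1"
      "lip0_dual M d z (Phi_star M d (\<mu> i))" "dual_norm M d z (Phi_star M d (\<mu> i)) = 1"
      by (rule optimal_normalized_imp_dual[OF Metric_space_axioms])+
  qed
  define \<alpha> where "\<alpha> = (1 - \<gamma>)\<^sup>2 / 2"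
  have params: "0 < \<alpha>" "0 < (1 - \<gamma>) / real n" "(1 - \<gamma>) / real n \<le> 2"
    using assms(2,4,5) by (auto simp: \<alpha>_def field_simps)
  have dual: "\<forall>i<n. lip0_dual M d z (Phi_star M d (\<mu> i)) \<and> dual_norm M d z (Phi_star M d (\<mu> i)) = 1"
    using \<mu>(3,4) by blast
  obtain P Q u v
    where PQ: "\<forall>i<n. P i \<in> slice M d z (Phi_star M d (\<mu> i)) \<alpha> \<and> Q i \<in> slice M d z (Phi_star M d (\<mu> i)) \<alpha>"
    and uv: "u \<in> M" "v \<in> M" "u \<noteq> v"
    and far: "(2 - (1 - \<gamma>) / real n) * d u v < (\<Sum>i<n. (1 / real n) * ((P i v - P i u) + (Q i u - Q i v)))"
    by (rule SD2P_lip0_far_pair[OF SD assms(2) dual params])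
  have ball: "P i \<in> lip0_ball M d z" "Q i \<in> lip0_ball M d z"
    and large: "1 - \<alpha> < Phi_star M d (\<mu> i) (P i)" "1 - \<alpha> < Phi_star M d (\<mu> i) (Q i)" if "i < n" for i
    using PQ that by (auto simp: slice_def)
  then have "\<forall>i<n. lipschitz_with M d 1 (P i) \<and> lipschitz_with M d 1 (Q i)"
    by (auto intro: lip0_ball_lipschitz)
  note gaps = gaps_from_average[OF this uv(1,2) far]
  define A where "A i = {p\<in>Mtilde M. \<gamma> \<le> molecule_val d (P i) p \<and> \<gamma> \<le> molecule_val d (Q i) p}" for i
  have measure: "\<gamma> \<le> \<mu> i (A i)" if "i < n" for i
    unfolding A_def using large[OF that] \<open>\<gamma> < 1\<close> unfolding \<alpha>_def
    by (rule slices_measure_large[OF \<mu>(1,2)[OF that] ball[OF that]])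
  have max_le: "max (P i x - P i y) (Q i y - Q i x) + \<gamma> * d u v \<le> d x u + d y v"
    if "i < n" "x \<in> pi_set (A i)" "y \<in> pi_set (A i)" for i x y
  proof (rule gap_max_le)
    show "x \<in> M" "y \<in> M"
      using that pi_set_subset[of "A i" M] by (auto simp: A_def)
    show "\<gamma> * d u v \<le> P i v - P i u" "\<gamma> * d u v \<le> Q i u - Q i v"
      using gaps[OF \<open>i < n\<close>] by simp_all
    show "lipschitz_with M d 1 (P i)" "lipschitz_with M d 1 (Q i)"
      using ball[OF \<open>i < n\<close>] by (simp_all add: lip0_ball_lipschitz)
  qed (use uv in simp_all)
  have "(\<forall>i<n. A i \<subseteq> Mtilde M \<and> \<gamma> \<le> \<mu> i (A i) \<and> P i \<in> lip0_ball M d z \<and> Q i \<in> lip0_ball M d z) \<and>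
      u \<in> M \<and> v \<in> M \<and> u \<noteq> v \<and>
      (\<forall>i<n. \<forall>p\<in>A i. \<gamma> \<le> molecule_val d (P i) p \<and> \<gamma> \<le> molecule_val d (Q i) p) \<and>
      (\<forall>i<n. \<forall>x\<in>pi_set (A i). \<forall>y\<in>pi_set (A i).
          max (P i x - P i y) (Q i y - Q i x) + \<gamma> * d u v \<le> d x u + d y v)"
    using measure ball uv max_le by (auto simp: A_def)
  then show ?thesis
    unfolding gap_witnesses_def by (intro exI)
qed

lemma Mtilde_nonempty:
  assumes "z \<in> M" "lip0_dual M d z \<phi>" "dual_norm M d z \<phi> = 1"
  shows "Mtilde M \<noteq> {}"
proof
  assume empty: "Mtilde M = {}"
  have "f = (\<lambda>x. 0)" if "f \<in> lip0_ball M d z" for f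
  proof
    fix x
    show "f x = 0"
      using that empty assms(1) by (cases "x \<in> M \<and> x \<noteq> z") (auto simp: mem_lip0_ball_iff Mtilde_def)
  qed
  then have "lip0_ball M d z = {\<lambda>x. 0}"
    using zero_in_lip0_ball by blast
  moreover have "\<phi> (\<lambda>x. 0 * 0) = 0 * \<phi> (\<lambda>x. 0)"
    using lip0_dual_scale[OF assms(2), of "\<lambda>x. 0" 0] zero_in_lip0_ball by (simp add: lip0_ball_def)
  ultimately have "dual_norm M d z \<phi> = 0"
    by (simp add: dual_norm_def)
  with assms(3) show False
    by simp
qed

lemma molecule_measure_large:
  assumes "pos_ba (Mtilde M) \<mu>" "\<mu> (Mtilde M) = 1" "f \<in> lip0_ball M d z"
    and "A \<subseteq> Mtilde M" "\<forall>p\<in>A. \<gamma> \<le> molecule_val d f p" "\<gamma> \<le> \<mu> A" "0 < \<gamma>"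
  shows "(1 + \<gamma>) * \<gamma> - 1 \<le> Phi_star M d \<mu> f"
proof -
  interpret pos_ba "Mtilde M" \<mu> by (fact assms(1))
  have f: "lipschitz_with M d 1 f" "f \<in> lip0 M d z"
    using lip0_ball_lipschitz[OF assms(3)] assms(3) by (auto simp: lip0_ball_def)
  have "(1 + \<gamma>) * \<gamma> - 1 \<le> (-1) * 1 + (1 + \<gamma>) * \<mu> A"
    using mult_left_mono[OF assms(6), of "1 + \<gamma>"] assms(7) by (simp add: algebra_simps)
  also have "\<dots> = fa_integral (Mtilde M) \<mu> (\<lambda>p. (-1) * 1 + (1 + \<gamma>) * indicator A p)"
    using fa_integral_lincomb[OF bounded_const_image[of 1] bounded_indicator[of A], of "-1" "1 + \<gamma>"]
      fa_integral_const fa_integral_indicator[OF assms(4)] assms(2) by simp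
  also have "\<dots> \<le> Phi_star M d \<mu> f"
    unfolding Phi_star_def
  proof (rule fa_integral_mono)
    show "(-1) * 1 + (1 + \<gamma>) * indicator A p \<le> molecule_val d f p" if "p \<in> Mtilde M" for p
      using abs_molecule_val_le[OF f(1) that] assms(5) by (auto simp: indicator_def)
  qed (intro bounded_molecule_val[OF f(2)] bounded_lincomb_comp bounded_const_image bounded_indicator)+
  finally show ?thesis .
qed

lemma slice_member_with_gap:
  assumes "z \<in> M" "pos_ba (Mtilde M) \<mu>" "\<mu> (Mtilde M) = 1" "\<forall>f\<in>lip0 M d z. Phi_star M d \<mu> f = \<phi> f"
    and A: "A \<subseteq> Mtilde M" "\<gamma> \<le> \<mu> A" and f: "f \<in> lip0_ball M d z" "\<forall>p\<in>A. \<gamma> \<le> molecule_val d f p"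
    and gap: "\<forall>x\<in>pi_set A. \<forall>y\<in>pi_set A. f x - f y + \<gamma> * d u v \<le> d x u + d y v"
    and "u \<in> M" "v \<in> M" "0 < \<gamma>" "\<gamma> \<le> 1" "1 - \<alpha> < (1 + \<gamma>) * \<gamma> - 1"
  obtains F where "F \<in> slice M d z \<phi> \<alpha>" "\<gamma> * d u v \<le> F v - F u"
proof -
  have "A \<noteq> {}"
    using A \<open>0 < \<gamma>\<close> pos_ba.empty[OF assms(2)] by auto
  then have "pi_set A \<noteq> {}"
    using fst_snd_in_pi_set by blast
  moreover have "lipschitz_with (pi_set A) d 1 f"
    using lip0_ball_lipschitz[OF f(1)] pi_set_subset[OF A(1)] by (rule lipschitz_with_subset)
  ultimately obtain G where G: "lipschitz_with M d 1 G" "\<forall>x\<in>pi_set A. G x = f x" "\<gamma> * d u v \<le> G v - G u"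
    using two_point_extension[OF pi_set_subset[OF A(1)]] gap \<open>u \<in> M\<close> \<open>v \<in> M\<close> \<open>\<gamma> \<le> 1\<close> by blast
  define F where "F x = (if x \<in> M then G x - G z else 0)" for x
  have F: "F \<in> lip0_ball M d z"
    unfolding F_def using lip0_ball_normalize[OF assms(1) G(1)] .
  have "molecule_val d F p = molecule_val d f p" if "p \<in> A" for p
    using that A(1) G(2) fst_snd_in_pi_set[OF that] by (intro molecule_val_shift) (auto simp: F_def Mtilde_def)
  then have "(1 + \<gamma>) * \<gamma> - 1 \<le> Phi_star M d \<mu> F"
    using f(2) by (intro molecule_measure_large[OF assms(2,3) F A(1) _ A(2) \<open>0 < \<gamma>\<close>]) auto
  then have "F \<in> slice M d z \<phi> \<alpha>"
    using F assms(4,14) by (auto simp: slice_def lip0_ball_def)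
  moreover have "\<gamma> * d u v \<le> F v - F u"
    using G(3) \<open>u \<in> M\<close> \<open>v \<in> M\<close> by (simp add: F_def)
  ultimately show ?thesis
    by (rule that)
qed

lemma slice_pair_with_gaps:
  assumes "z \<in> M" and rep: "pos_ba (Mtilde M) \<mu>" "\<mu> (Mtilde M) = 1" "\<forall>f\<in>lip0 M d z. Phi_star M d \<mu> f = \<phi> f"
    and A: "A \<subseteq> Mtilde M" "\<gamma> \<le> \<mu> A" and fg: "f \<in> lip0_ball M d z" "g \<in> lip0_ball M d z"
    and mol: "\<forall>p\<in>A. \<gamma> \<le> molecule_val d f p \<and> \<gamma> \<le> molecule_val d g p"
    and gap: "\<forall>x\<in>pi_set A. \<forall>y\<in>pi_set A. max (f x - f y) (g y - g x) + \<gamma> * d u v \<le> d x u + d y v"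
    and uv: "u \<in> M" "v \<in> M" and \<gamma>: "0 < \<gamma>" "\<gamma> \<le> 1" and \<alpha>: "1 - \<alpha> < (1 + \<gamma>) * \<gamma> - 1"
  obtains F G where "F \<in> slice M d z \<phi> \<alpha>" "G \<in> slice M d z \<phi> \<alpha>"
    "\<gamma> * d u v \<le> F v - F u" "\<gamma> * d u v \<le> G u - G v"
proof -
  have gap_f: "\<forall>x\<in>pi_set A. \<forall>y\<in>pi_set A. f x - f y + \<gamma> * d u v \<le> d x u + d y v"
  proof (intro ballI)
    fix x y
    assume "x \<in> pi_set A" "y \<in> pi_set A"
    then show "f x - f y + \<gamma> * d u v \<le> d x u + d y v"
      using gap max.cobounded1[of "f x - f y" "g y - g x"] by fastforce
  qed
  have gap_g: "\<forall>x\<in>pi_set A. \<forall>y\<in>pi_set A. g x - g y + \<gamma> * d v u \<le> d x v + d y u"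
  proof (intro ballI)
    fix x y
    assume "x \<in> pi_set A" "y \<in> pi_set A"
    then show "g x - g y + \<gamma> * d v u \<le> d x v + d y u"
      using gap max.cobounded2[of "f y - f x" "g x - g y"] commute[of u v] by fastforce
  qed
  have mol_f: "\<forall>p\<in>A. \<gamma> \<le> molecule_val d f p" and mol_g: "\<forall>p\<in>A. \<gamma> \<le> molecule_val d g p"
    using mol by auto
  obtain F where "F \<in> slice M d z \<phi> \<alpha>" "\<gamma> * d u v \<le> F v - F u"
    by (rule slice_member_with_gap[OF \<open>z \<in> M\<close> rep A fg(1) mol_f gap_f uv \<gamma> \<alpha>])
  moreover obtain G where "G \<in> slice M d z \<phi> \<alpha>" "\<gamma> * d v u \<le> G u - G v"
    by (rule slice_member_with_gap[OF \<open>z \<in> M\<close> rep A fg(2) mol_g gap_g uv(2,1) \<gamma> \<alpha>])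
  ultimately show ?thesis
    using that commute[of u v] by simp
qed

lemma gap_witnesses_imp_slice_pairs:
  assumes "z \<in> M"
    and rep: "\<forall>i<n. pos_ba (Mtilde M) (\<mu> i) \<and> \<mu> i (Mtilde M) = 1 \<and> (\<forall>f\<in>lip0 M d z. Phi_star M d (\<mu> i) f = \<phi> i f)"
    and "gap_witnesses M d z n \<mu> \<gamma>" "0 < \<gamma>" "\<gamma> \<le> 1" "\<forall>i<n. 1 - \<alpha> i < (1 + \<gamma>) * \<gamma> - 1"
  obtains F G u v where
    "\<forall>i<n. F i \<in> slice M d z (\<phi> i) (\<alpha> i) \<and> G i \<in> slice M d z (\<phi> i) (\<alpha> i) \<and>
       \<gamma> * d u v \<le> F i v - F i u \<and> \<gamma> * d u v \<le> G i u - G i v"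
    "u \<in> M" "v \<in> M" "u \<noteq> v"
proof -
  obtain A f g u v where A: "\<forall>i<n. A i \<subseteq> Mtilde M \<and> \<gamma> \<le> \<mu> i (A i) \<and> f i \<in> lip0_ball M d z \<and> g i \<in> lip0_ball M d z"
    and uv: "u \<in> M" "v \<in> M" "u \<noteq> v"
    and mol: "\<forall>i<n. \<forall>p\<in>A i. \<gamma> \<le> molecule_val d (f i) p \<and> \<gamma> \<le> molecule_val d (g i) p"
    and gap: "\<forall>i<n. \<forall>x\<in>pi_set (A i). \<forall>y\<in>pi_set (A i). max (f i x - f i y) (g i y - g i x) + \<gamma> * d u v \<le> d x u + d y v"
    using assms(3) unfolding gap_witnesses_def by blast
  have "\<exists>FG. fst FG \<in> slice M d z (\<phi> i) (\<alpha> i) \<and> snd FG \<in> slice M d z (\<phi> i) (\<alpha> i) \<and>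
      \<gamma> * d u v \<le> fst FG v - fst FG u \<and> \<gamma> * d u v \<le> snd FG u - snd FG v" if i: "i < n" for i
  proof -
    have rep_i: "pos_ba (Mtilde M) (\<mu> i)" "\<mu> i (Mtilde M) = 1" "\<forall>f\<in>lip0 M d z. Phi_star M d (\<mu> i) f = \<phi> i f"
      and A_i: "A i \<subseteq> Mtilde M" "\<gamma> \<le> \<mu> i (A i)" "f i \<in> lip0_ball M d z" "g i \<in> lip0_ball M d z"
      using rep A i by auto
    have "\<forall>p\<in>A i. \<gamma> \<le> molecule_val d (f i) p \<and> \<gamma> \<le> molecule_val d (g i) p"
      "\<forall>x\<in>pi_set (A i). \<forall>y\<in>pi_set (A i). max (f i x - f i y) (g i y - g i x) + \<gamma> * d u v \<le> d x u + d y v"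
      "1 - \<alpha> i < (1 + \<gamma>) * \<gamma> - 1"
      using mol gap assms(6) i by auto
    then obtain F G where "F \<in> slice M d z (\<phi> i) (\<alpha> i)" "G \<in> slice M d z (\<phi> i) (\<alpha> i)"
      "\<gamma> * d u v \<le> F v - F u" "\<gamma> * d u v \<le> G u - G v"
      by (rule slice_pair_with_gaps[OF \<open>z \<in> M\<close> rep_i A_i _ _ uv(1,2) assms(4,5)])
    then show ?thesis
      by (intro exI[of _ "(F, G)"]) simp
  qed
  then obtain FG where "\<forall>i\<in>{..<n}. fst (FG i) \<in> slice M d z (\<phi> i) (\<alpha> i) \<and> snd (FG i) \<in> slice M d z (\<phi> i) (\<alpha> i) \<and>
      \<gamma> * d u v \<le> fst (FG i) v - fst (FG i) u \<and> \<gamma> * d u v \<le> snd (FG i) u - snd (FG i) v"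
    by (metis (no_types, lifting) bchoice lessThan_iff)
  then show ?thesis
    using uv by (intro that[of "\<lambda>i. fst (FG i)" "\<lambda>i. snd (FG i)" u v]) auto
qed

lemma lip_diam_eq_2I:
  assumes "\<forall>h\<in>S. lipschitz_with M d 1 h"
    and far: "\<And>\<epsilon>. 0 < \<epsilon> \<Longrightarrow> \<exists>f\<in>S. \<exists>g\<in>S. 2 - \<epsilon> < lipnorm M d (\<lambda>x. f x - g x)"
  shows "lip_diam M d S = 2"
  unfolding lip_diam_def
proof (rule cSup_eq_non_empty)
  show "{lipnorm M d (\<lambda>x. f x - g x) | f g. f \<in> S \<and> g \<in> S} \<noteq> {}"
    using far[of 1] by auto
  show "s \<le> 2" if s: "s \<in> {lipnorm M d (\<lambda>x. f x - g x) | f g. f \<in> S \<and> g \<in> S}" for s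
  proof -
    obtain f g where "s = lipnorm M d (\<lambda>x. f x - g x)" "f \<in> S" "g \<in> S"
      using s by blast
    moreover have "lipschitz_with M d 1 f" "lipschitz_with M d 1 g"
      using assms(1) \<open>f \<in> S\<close> \<open>g \<in> S\<close> by auto
    then have "lipschitz_with M d 2 (\<lambda>x. f x - g x)"
      using lipschitz_with_lincomb[of M d 1 f 1 g 1 "-1"] by simp
    ultimately show ?thesis
      using lipnorm_le[of 2] by simp
  qed
  show "2 \<le> y" if ub: "\<And>s. s \<in> {lipnorm M d (\<lambda>x. f x - g x) | f g. f \<in> S \<and> g \<in> S} \<Longrightarrow> s \<le> y" for y
  proof (rule ccontr)
    assume "\<not> 2 \<le> y"
    then obtain f g where "f \<in> S" "g \<in> S" "2 - (2 - y) < lipnorm M d (\<lambda>x. f x - g x)"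
      using far[of "2 - y"] by auto
    with ub[of "lipnorm M d (\<lambda>x. f x - g x)"] show False
      by auto
  qed
qed

lemma lipnorm_convex_comb_gap:
  assumes lam: "\<forall>i<n. 0 \<le> lam i" "(\<Sum>i<n. lam i) = 1"
    and FG: "\<forall>i<n. lipschitz_with M d 1 (F i) \<and> lipschitz_with M d 1 (G i)"
    and "u \<in> M" "v \<in> M" "u \<noteq> v"
    and gap: "\<forall>i<n. \<gamma> * d u v \<le> F i v - F i u \<and> \<gamma> * d u v \<le> G i u - G i v"
  shows "2 * \<gamma> \<le> lipnorm M d (\<lambda>x. (\<Sum>i<n. lam i * G i x) - (\<Sum>i<n. lam i * F i x))"
proof -
  let ?h = "\<lambda>x. (\<Sum>i<n. lam i * G i x) - (\<Sum>i<n. lam i * F i x)"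
  have "lipschitz_with M d (\<bar>1\<bar> * 1 + \<bar>-1\<bar> * 1) (\<lambda>x. 1 * (\<Sum>i<n. lam i * G i x) + (-1) * (\<Sum>i<n. lam i * F i x))"
    using lam FG by (intro lipschitz_with_lincomb lipschitz_with_convex_comb) auto
  then have quotient: "\<bar>?h u - ?h v\<bar> / d u v \<le> lipnorm M d ?h"
    using assms(4-6) by (intro quotient_le_lipnorm) auto
  have "2 * \<gamma> * d u v = (\<Sum>i<n. lam i * (2 * \<gamma> * d u v))"
    using lam(2) by (simp add: sum_distrib_right[symmetric])
  also have "\<dots> \<le> (\<Sum>i<n. lam i * ((G i u - G i v) + (F i v - F i u)))"
    using lam(1) gap by (intro sum_mono mult_left_mono) auto
  also have "\<dots> = ?h u - ?h v"
    by (simp add: sum_subtractf[symmetric] sum.distrib[symmetric] algebra_simps)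
  also have "\<dots> \<le> \<bar>?h u - ?h v\<bar>"
    by (rule abs_ge_self)
  finally have "2 * \<gamma> \<le> \<bar>?h u - ?h v\<bar> / d u v"
    using mdist_pos_less[OF assms(6,4,5)] by (simp add: le_divide_eq)
  with quotient show ?thesis
    by linarith
qed

lemma gap_witnesses_imp_far_combination:
  assumes "z \<in> M" "1 \<le> n"
    and rep: "\<forall>i<n. pos_ba (Mtilde M) (\<mu> i) \<and> \<mu> i (Mtilde M) = 1 \<and> (\<forall>f\<in>lip0 M d z. Phi_star M d (\<mu> i) f = \<phi> i f)"
    and wit: "\<forall>\<gamma>. 0 < \<gamma> \<and> \<gamma> < 1 \<longrightarrow> gap_witnesses M d z n \<mu> \<gamma>"
    and lam: "\<forall>i<n. 0 \<le> lam i" "(\<Sum>i<n. lam i) = 1" and \<alpha>: "\<forall>i<n. 0 < \<alpha> i" and "0 < \<epsilon>"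
  obtains h1 h2 where "h1 \<in> convex_comb_sets n lam (\<lambda>i. slice M d z (\<phi> i) (\<alpha> i))"
    "h2 \<in> convex_comb_sets n lam (\<lambda>i. slice M d z (\<phi> i) (\<alpha> i))" "2 - \<epsilon> < lipnorm M d (\<lambda>x. h1 x - h2 x)"
proof -
  define m where "m = min (min (Min (\<alpha> ` {..<n})) \<epsilon>) 1"
  have "0 < Min (\<alpha> ` {..<n})"
    using \<alpha> \<open>1 \<le> n\<close> by (subst Min_gr_iff) (auto simp: lessThan_empty_iff)
  moreover have "Min (\<alpha> ` {..<n}) \<le> \<alpha> i" if "i < n" for i
    using that by (intro Min_le) auto
  ultimately have "0 < m" "m \<le> \<epsilon>" "m \<le> 1" "\<forall>i<n. m \<le> \<alpha> i"
    using \<open>0 < \<epsilon>\<close> by (auto simp: m_def min.coboundedI1)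
  define \<gamma> where "\<gamma> = 1 - m / 4"
  have \<gamma>: "0 < \<gamma>" "\<gamma> < 1" "2 - \<epsilon> < 2 * \<gamma>"
    using \<open>0 < m\<close> \<open>m \<le> \<epsilon>\<close> \<open>m \<le> 1\<close> by (auto simp: \<gamma>_def)
  have eq: "(1 + \<gamma>) * \<gamma> - 1 = 1 - m + m / 4 + m * m / 16"
    by (simp add: \<gamma>_def field_simps)
  have "\<forall>i<n. 1 - \<alpha> i < (1 + \<gamma>) * \<gamma> - 1"
  proof (intro allI impI)
    fix i
    assume "i < n"
    then have "m \<le> \<alpha> i"
      using \<open>\<forall>i<n. m \<le> \<alpha> i\<close> by blast
    moreover have "0 \<le> m * m"
      by simp
    ultimately show "1 - \<alpha> i < (1 + \<gamma>) * \<gamma> - 1"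
      using eq \<open>0 < m\<close> by linarith
  qed
  then obtain F G u v where FG: "\<forall>i<n. F i \<in> slice M d z (\<phi> i) (\<alpha> i) \<and> G i \<in> slice M d z (\<phi> i) (\<alpha> i) \<and>
       \<gamma> * d u v \<le> F i v - F i u \<and> \<gamma> * d u v \<le> G i u - G i v"
    and uv: "u \<in> M" "v \<in> M" "u \<noteq> v"
    using gap_witnesses_imp_slice_pairs[OF \<open>z \<in> M\<close> rep _ \<gamma>(1) less_imp_le[OF \<gamma>(2)]] wit \<gamma>(1,2) by blast
  have "\<forall>i<n. lipschitz_with M d 1 (F i) \<and> lipschitz_with M d 1 (G i)"
    using FG by (auto simp: slice_def intro: lip0_ball_lipschitz)
  then have "2 * \<gamma> \<le> lipnorm M d (\<lambda>x. (\<Sum>i<n. lam i * G i x) - (\<Sum>i<n. lam i * F i x))"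
    using FG by (intro lipnorm_convex_comb_gap[OF lam _ uv]) auto
  then show ?thesis
    using FG \<gamma>(3)
    by (intro that[of "\<lambda>x. \<Sum>i<n. lam i * G i x" "\<lambda>x. \<Sum>i<n. lam i * F i x"]) (auto simp: convex_comb_sets_def)
qed

lemma lipschitz_convex_comb_slices:
  assumes "\<forall>i<n. 0 \<le> lam i" "(\<Sum>i<n. lam i) = 1" "h \<in> convex_comb_sets n lam (\<lambda>i. slice M d z (\<phi> i) (\<alpha> i))"
  shows "lipschitz_with M d 1 h"
proof -
  obtain F where "h = (\<lambda>x. \<Sum>i<n. lam i * F i x)" "\<forall>i<n. F i \<in> lip0_ball M d z"
    using assms(3) by (auto simp: convex_comb_sets_def slice_def)
  moreover have "\<forall>i<n. lipschitz_with M d 1 (F i)"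
    using calculation(2) by (auto intro: lip0_ball_lipschitz)
  ultimately show ?thesis
    using assms(1,2) lipschitz_with_convex_comb[where M = M and d = d and n = n and lam = lam and F = F] by simp
qed

lemma represent_duals:
  assumes "z \<in> M" "Mtilde M \<noteq> {}" "\<forall>i<n. lip0_dual M d z (\<phi> i) \<and> dual_norm M d z (\<phi> i) = 1"
  obtains \<mu> where "\<forall>i<n. pos_ba (Mtilde M) (\<mu> i) \<and> \<mu> i (Mtilde M) = 1 \<and>
    (\<forall>f\<in>lip0 M d z. Phi_star M d (\<mu> i) f = \<phi> i f)"
proof -
  have "\<forall>i\<in>{..<n}. \<exists>\<mu>. pos_ba (Mtilde M) \<mu> \<and> \<mu> (Mtilde M) = 1 \<and> (\<forall>f\<in>lip0 M d z. Phi_star M d \<mu> f = \<phi> i f)"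
    using assms represent_dual[OF Metric_space_axioms assms(1,2)] by (metis lessThan_iff)
  then show ?thesis
    using that by (auto dest!: bchoice)
qed

lemma gap_witnesses_imp_SD2P_lip0:
  assumes "z \<in> M"
    and wit: "\<And>n \<mu> \<gamma>. 1 \<le> n \<Longrightarrow> \<forall>i<n. optimal M d z (\<mu> i) \<and> ba_norm (Mtilde M) (\<mu> i) = 1 \<Longrightarrow>
      0 < \<gamma> \<Longrightarrow> \<gamma> < 1 \<Longrightarrow> gap_witnesses M d z n \<mu> \<gamma>"
  shows "SD2P_lip0 M d z"
  unfolding SD2P_lip0_def
proof (intro allI impI)
  fix n :: nat and lam :: "nat \<Rightarrow> real" and \<phi> and \<alpha> :: "nat \<Rightarrow> real"
  assume H: "(\<forall>i<n. 0 \<le> lam i) \<and> (\<Sum>i<n. lam i) = 1 \<and>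
    (\<forall>i<n. lip0_dual M d z (\<phi> i) \<and> dual_norm M d z (\<phi> i) = 1 \<and> 0 < \<alpha> i)"
  then have "1 \<le> n"
    by (cases n) auto
  have dual: "\<forall>i<n. lip0_dual M d z (\<phi> i) \<and> dual_norm M d z (\<phi> i) = 1"
    using H by auto
  then have "Mtilde M \<noteq> {}"
    using \<open>1 \<le> n\<close> Mtilde_nonempty[OF assms(1)] by auto
  then obtain \<mu> where rep: "\<forall>i<n. pos_ba (Mtilde M) (\<mu> i) \<and> \<mu> i (Mtilde M) = 1 \<and>
      (\<forall>f\<in>lip0 M d z. Phi_star M d (\<mu> i) f = \<phi> i f)"
    using represent_duals[OF assms(1) _ dual] by blast
  have "\<forall>i<n. optimal M d z (\<mu> i) \<and> ba_norm (Mtilde M) (\<mu> i) = 1"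
  proof (intro allI impI)
    fix i
    assume "i < n"
    then show "optimal M d z (\<mu> i) \<and> ba_norm (Mtilde M) (\<mu> i) = 1"
      using rep dual by (intro dual_imp_optimal_normalized) auto
  qed
  then have "\<forall>\<gamma>. 0 < \<gamma> \<and> \<gamma> < 1 \<longrightarrow> gap_witnesses M d z n \<mu> \<gamma>"
    using wit \<open>1 \<le> n\<close> by blast
  note far = gap_witnesses_imp_far_combination[OF assms(1) \<open>1 \<le> n\<close> rep this]
  show "lip_diam M d (convex_comb_sets n lam (\<lambda>i. slice M d z (\<phi> i) (\<alpha> i))) = 2"
  proof (rule lip_diam_eq_2I)
    show "\<forall>h\<in>convex_comb_sets n lam (\<lambda>i. slice M d z (\<phi> i) (\<alpha> i)). lipschitz_with M d 1 h"
      using H lipschitz_convex_comb_slices by blast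
    have "\<forall>i<n. 0 \<le> lam i" "(\<Sum>i<n. lam i) = 1" "\<forall>i<n. 0 < \<alpha> i"
      using H by auto
    then show "\<exists>f\<in>convex_comb_sets n lam (\<lambda>i. slice M d z (\<phi> i) (\<alpha> i)).
        \<exists>g\<in>convex_comb_sets n lam (\<lambda>i. slice M d z (\<phi> i) (\<alpha> i)). 2 - \<epsilon> < lipnorm M d (\<lambda>x. f x - g x)"
      if "0 < \<epsilon>" for \<epsilon>
      using far that by blast
  qed
qed

end

theorem proposition3p6:
  fixes M :: "'a set" and d :: "'a \<Rightarrow> 'a \<Rightarrow> real" and z :: 'a
  assumes "Metric_space M d" and "z \<in> M"
  shows "SD2P_lip0 M d z \<longleftrightarrow>
    (\<forall>(n::nat) (\<mu> :: nat \<Rightarrow> ('a \<times> 'a) set \<Rightarrow> real) (\<gamma>::real).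
       n \<ge> 1 \<and> (\<forall>i<n. optimal M d z (\<mu> i) \<and> ba_norm (Mtilde M) (\<mu> i) = 1) \<and>
       0 < \<gamma> \<and> \<gamma> < 1 \<longrightarrow>
       (\<exists>(A :: nat \<Rightarrow> ('a \<times> 'a) set) (f :: nat \<Rightarrow> 'a \<Rightarrow> real) (g :: nat \<Rightarrow> 'a \<Rightarrow> real) u v.
          (\<forall>i<n. A i \<subseteq> Mtilde M \<and> \<mu> i (A i) \<ge> \<gamma> \<and>
                 f i \<in> lip0_ball M d z \<and> g i \<in> lip0_ball M d z) \<and>
          u \<in> M \<and> v \<in> M \<and> u \<noteq> v \<and>
          (\<forall>i<n. \<forall>p\<in>A i. molecule_val d (f i) p \<ge> \<gamma> \<and> molecule_val d (g i) p \<ge> \<gamma>) \<and>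
          (\<forall>i<n. \<forall>x\<in>pi_set (A i). \<forall>y\<in>pi_set (A i).
              max (f i x - f i y) (g i y - g i x) + \<gamma> * d u v \<le> d x u + d y v)))"
proof -
  interpret Metric_space M d
    by (fact assms(1))
  have "SD2P_lip0 M d z \<longleftrightarrow>
    (\<forall>(n::nat) \<mu> \<gamma>. 1 \<le> n \<and> (\<forall>i<n. optimal M d z (\<mu> i) \<and> ba_norm (Mtilde M) (\<mu> i) = 1) \<and> 0 < \<gamma> \<and> \<gamma> < 1 \<longrightarrow>
      gap_witnesses M d z n \<mu> \<gamma>)"
    using SD2P_lip0_imp_gap_witnesses gap_witnesses_imp_SD2P_lip0[OF assms(2)] by blast
  then show ?thesis
    by (simp only: gap_witnesses_def)
qed

end
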